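(* Let $|\Omega\rangle=d^{-1/2}\sum_{j=1}^d|j,j\rangle$ and $\mathcal{U}=\mathrm{conv}\{(\mathbb{1}\otimes U)|\Omega\rangle\langle\Omega|(\mathbb{1}\otimes U^\dagger): U\in\mathcal{M}_d\text{ unitary}\}$. For a unital quantum channel $T:\mathcal{M}_d\to\mathcal{M}_d$ (completely positive, trace-preserving, $T(\mathbb{1})=\mathbb{1}$) with Jamiolkowski state $\rho_T=(\mathrm{id}\otimes T)(|\Omega\rangle\langle\Omega|)$, define $$\|T\|_{\mathcal{U}}:=\inf\{\alpha_p+\alpha_n:\ \rho_T=\alpha_p\sigma_p-\alpha_n\sigma_n,\ \alpha_p,\alpha_n\ge0,\ \sigma_p,\sigma_n\in\mathcal{U}\}.$$ Let $T_1,\dots,T_k$ be unital quantum channels on $\mathcal{M}_d$ and $p_1,\dots,p_k\ge0$ with $\sum_ip_i=1$. Then $\|T_1\circ T_2\circ\cdots\circ T_k\|_{\mathcal{U}}\le\prod_i\|T_i\|_{\mathcal{U}}$ and $\|\sum_ip_iT_i\|_{\mathcal{U}}\le\sum_ip_i\|T_i\|_{\mathcal{U}}$. *)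

theory Defs
  imports "HOL-Analysis.Analysis"
begin

text \<open>Matrices in M_d are represented as complex^'n^'n with d = CARD('n);
  operators on C^d \<otimes> C^d are indexed by the product type 'n \<times> 'n.\<close>

type_synonym 'n cmat = "complex^'n^'n"

definition adjointm :: "complex^'m^'n \<Rightarrow> complex^'n^'m" where
  "adjointm U = (\<chi> i j. cnj (U $ j $ i))"

definition unitary :: "'n::finite cmat \<Rightarrow> bool" where
  "unitary U \<longleftrightarrow> U ** adjointm U = mat 1 \<and> adjointm U ** U = mat 1"

definition trace_m :: "complex^'n^'n \<Rightarrow> complex" where
  "trace_m A = (\<Sum>i\<in>UNIV. A $ i $ i)"

definition ketbra :: "complex^'m \<Rightarrow> complex^'m^'m" where
  "ketbra \<psi> = (\<chi> a b. \<psi> $ a * cnj (\<psi> $ b))"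

definition Omega :: "complex^('n::finite \<times> 'n)" where
  "Omega = (\<chi> ij. if fst ij = snd ij then complex_of_real (1 / sqrt (real CARD('n))) else 0)"

text \<open>(1 \<otimes> U) applied to a vector of C^d \<otimes> C^d.\<close>
definition id_tensor_vec :: "'n::finite cmat \<Rightarrow> complex^('n \<times> 'n) \<Rightarrow> complex^('n \<times> 'n)" where
  "id_tensor_vec U v = (\<chi> ab. \<Sum>c\<in>UNIV. U $ snd ab $ c * v $ (fst ab, c))"

definition Ucal :: "(complex^('n::finite \<times> 'n)^('n \<times> 'n)) set" where
  "Ucal = convex hull {ketbra (id_tensor_vec U Omega) | U. unitary U}"

text \<open>(id \<otimes> T) applied to an operator on C^d \<otimes> C^d (block-wise application of T).\<close>
definition id_tensor_map :: "('n::finite cmat \<Rightarrow> 'n cmat) \<Rightarrow>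
    complex^('m::finite \<times> 'n)^('m \<times> 'n) \<Rightarrow> complex^('m \<times> 'n)^('m \<times> 'n)" where
  "id_tensor_map T X = (\<chi> ab ce. T (\<chi> b' e'. X $ (fst ab, b') $ (fst ce, e')) $ snd ab $ snd ce)"

definition choi :: "('n::finite cmat \<Rightarrow> 'n cmat) \<Rightarrow> complex^('n \<times> 'n)^('n \<times> 'n)" where
  "choi T = id_tensor_map T (ketbra Omega)"

definition cscale :: "complex \<Rightarrow> complex^'n^'m \<Rightarrow> complex^'n^'m" where
  "cscale c A = (\<chi> i j. c * A $ i $ j)"

definition clinear_map :: "('n::finite cmat \<Rightarrow> 'n cmat) \<Rightarrow> bool" where
  "clinear_map T \<longleftrightarrow> (\<forall>A B. T (A + B) = T A + T B) \<and> (\<forall>c A. T (cscale c A) = cscale c (T A))"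

text \<open>Positive semidefiniteness of a k\<times>k block matrix with d\<times>d blocks
  (given as a function of the block indices i, j < k).\<close>
definition psd_block :: "nat \<Rightarrow> (nat \<Rightarrow> nat \<Rightarrow> 'n::finite cmat) \<Rightarrow> bool" where
  "psd_block k X \<longleftrightarrow> (\<forall>v :: nat \<Rightarrow> complex^'n.
     (let q = (\<Sum>i<k. \<Sum>j<k. (\<Sum>a\<in>UNIV. cnj (v i $ a) * ((X i j) *v (v j)) $ a))
      in Im q = 0 \<and> Re q \<ge> 0))"

definition completely_positive :: "('n::finite cmat \<Rightarrow> 'n cmat) \<Rightarrow> bool" where
  "completely_positive T \<longleftrightarrow>
     (\<forall>k X. psd_block k X \<longrightarrow> psd_block k (\<lambda>i j. T (X i j)))"

definition unital_channel :: "('n::finite cmat \<Rightarrow> 'n cmat) \<Rightarrow> bool" where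
  "unital_channel T \<longleftrightarrow> clinear_map T \<and> completely_positive T \<and>
     (\<forall>A. trace_m (T A) = trace_m A) \<and> T (mat 1) = mat 1"

definition normU :: "('n::finite cmat \<Rightarrow> 'n cmat) \<Rightarrow> real" where
  "normU T = Inf {ap + an | ap an sp sn. ap \<ge> 0 \<and> an \<ge> 0 \<and> sp \<in> Ucal \<and> sn \<in> Ucal \<and>
                   choi T = ap *\<^sub>R sp - an *\<^sub>R sn}"

end

theory Submission
  imports Defs
begin

text \<open>
  Index the Choi state of a linear map T by its kernel
  K_T(b,a,e,c) = \<langle>b|T(|a\<rangle>\<langle>c|)|e\<rangle>, which is d times the entry of \<rho>_T at ((a,b),(c,e)).
  The state (1 \<otimes> U)|\<Omega>\<rangle>\<langle>\<Omega>|(1 \<otimes> U*) is the Choi state of X \<mapsto> U X U*, with kernel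
  U_ba conj(U_ec), and the kernel of a composition is the matrix product of the kernels.
  Since \<U> is a convex hull, \<parallel>T\<parallel>_\<U> is the infimum of \<Sum>|r_i| over all ways of writing
  \<rho>_T = \<Sum> r_i \<rho>_{U_i} with real r_i and unitary U_i.  Two such expressions for T and S
  multiply to one for T \<circ> S, namely \<Sum> r_i s_j \<rho>_{U_i V_j}, and expressions for the T_i
  mix to one for \<Sum> p_i T_i; this gives both inequalities.

  The infimum is not taken over the empty set: the kernel of a unital channel minus that of
  the identity is hermitian (complete positivity) and has vanishing partial traces
  (unitality and trace preservation), and every such kernel is a real combination of
  differences of kernels of unitaries that differ only in a 2\<times>2 block.
\<close>

lemma convex_scaleR_add_obtain:
  fixes C :: "'a::real_vector set"
  assumes "convex C" "x \<in> C" "y \<in> C" "a \<ge> 0" "b \<ge> 0"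
  obtains z where "z \<in> C" "a *\<^sub>R x + b *\<^sub>R y = (a + b) *\<^sub>R z"
proof (cases "a + b = 0")
  case True
  then show ?thesis using assms by (intro that[of x]) (auto simp: add_nonneg_eq_0_iff)
next
  case False
  then have pos: "a + b > 0" using assms(4,5) by linarith
  let ?z = "(a / (a + b)) *\<^sub>R x + (b / (a + b)) *\<^sub>R y"
  have "?z \<in> C"
    by (rule convexD[OF assms(1-3)]) (use pos assms(4,5) in \<open>auto simp: add_divide_distrib[symmetric]\<close>)
  moreover have "a *\<^sub>R x + b *\<^sub>R y = (a + b) *\<^sub>R ?z"
    using pos by (simp add: scaleR_add_right)
  ultimately show ?thesis by (rule that)
qed

lemma le_mult_Inf:
  fixes a c :: real
  assumes "B \<noteq> {}" "a \<ge> 0" "\<And>y. y \<in> B \<Longrightarrow> c \<le> a * y"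
  shows "c \<le> a * Inf B"
proof (cases "a = 0")
  case True
  then show ?thesis using assms(1,3) by auto
next
  case False
  then have "c / a \<le> Inf B"
    using assms by (intro cInf_greatest) (auto simp: divide_le_eq mult.commute)
  then show ?thesis using False assms(2) by (simp add: divide_le_eq mult.commute)
qed

lemma bij_mapping_two_points:
  assumes "x1 \<noteq> x2" "y1 \<noteq> y2"
  obtains \<sigma> :: "'a \<Rightarrow> 'a" where "bij \<sigma>" "\<sigma> y1 = x1" "\<sigma> y2 = x2"
proof
  let ?\<tau> = "Transposition.transpose y1 x1"
  let ?\<sigma> = "Transposition.transpose (?\<tau> y2) x2 \<circ> ?\<tau>"
  show "bij ?\<sigma>" by (simp add: bij_comp)
  have "?\<tau> y2 \<noteq> x1" using assms(2) by (auto simp: Transposition.transpose_def)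
  then show "?\<sigma> y1 = x1" using assms(1) by (simp add: transpose_apply_other)
  show "?\<sigma> y2 = x2" by simp
qed

lemma sum_UNIV_split2:
  fixes f :: "'a::finite \<Rightarrow> complex"
  assumes "y1 \<noteq> y2"
  shows "sum f UNIV = f y1 + f y2 + sum f (UNIV - {y1,y2})"
proof -
  have "UNIV = insert y1 (insert y2 (UNIV - {y1,y2}))" by auto
  then have "sum f UNIV = sum f (insert y1 (insert y2 (UNIV - {y1,y2})))" by simp
  also have "\<dots> = f y1 + f y2 + sum f (UNIV - {y1,y2})" using assms by (simp add: add.assoc)
  finally show ?thesis .
qed

lemma sum_perm_delta:
  fixes \<sigma> :: "'a::finite \<Rightarrow> 'a"
  assumes "bij \<sigma>"
  shows "(\<Sum>j\<in>A. (if i = \<sigma> j then 1 else 0) * cnj (if k = \<sigma> j then 1 else 0))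
     = (if inv \<sigma> i \<in> A \<and> i = k then (1::complex) else 0)"
proof -
  have "\<And>j. (if i = \<sigma> j then 1 else 0) * cnj (if k = \<sigma> j then 1 else 0)
      = (if j = inv \<sigma> i then (if i = k then 1 else 0) else (0::complex))"
    using assms by (auto simp: bij_inv_eq_iff)
  then show ?thesis by (auto simp: sum.delta')
qed

lemma if_conj_zero: "(if P \<and> Q then a else 0) = (if P then if Q then a else 0 else 0)"
  by simp

lemma mult_if_one_zero: "a * (if P then 1 else 0) = (if P then a else (0::'a::semiring_1))"
  by simp

lemma if_one_zero_mult: "(if P then 1 else 0) * a = (if P then a else (0::'a::semiring_1))" by simp

lemma mult_if_zero: "x * (if P then y else 0) = (if P then x * y else (0::complex))" by simp

lemma sum_if_const:
  "(\<Sum>c\<in>A. if P then Y c else 0) = (if P then (\<Sum>c\<in>A. Y c) else (0::complex))"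
  by (cases P) simp_all

lemma cnj_if_zero [simp]: "cnj (if P then x else 0) = (if P then cnj x else 0)" by simp

lemma cnj_of_bool [simp]: "cnj (of_bool P) = of_bool P" by (simp add: of_bool_def)

lemma sum2_mult_delta:
  "(\<Sum>x\<in>(UNIV::'a::finite set). \<Sum>y\<in>(UNIV::'b::finite set). f x y * (if i = x \<and> j = y then 1 else 0)) = (f i j :: 'c::comm_ring_1)"
proof -
  have "\<And>x. (\<Sum>y\<in>(UNIV::'b set). f x y * (if i = x \<and> j = y then 1 else 0)) = (if i = x then f x j else 0)"
    by (cases "i = x") (simp_all add: mult_if_one_zero)
  then show ?thesis by simp
qed

lemma sum2_two_deltas:
  fixes x :: "'a::finite" and y :: "'b::finite"
  shows "(\<Sum>a\<in>UNIV. \<Sum>b\<in>UNIV. (if a = x then u else 0) * (if b = y then v else 0) * K a b) = u * v * (K x y :: complex)"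
proof -
  have "\<And>a b. (if a = x then u else 0) * (if b = y then v else 0) * K a b = (if a = x then if b = y then u * v * K x y else 0 else 0)"
    by simp
  moreover have "\<And>a. (\<Sum>b\<in>UNIV. if a = x then if b = y then u * v * K x y else 0 else 0) = (if a = x then u * v * K x y else 0)"
    by (case_tac "a = x") simp_all
  ultimately show ?thesis by simp
qed

lemma sum2_two_point:
  fixes x y :: "'a::finite"
  shows "(\<Sum>a\<in>UNIV. \<Sum>b\<in>UNIV. ((if a = x then 1 else 0) + (if a = y then w else 0)) * 
      ((if b = x then 1 else 0) + (if b = y then z else 0)) * K a b)
   = K x x + z * K x y + w * K y x + w * z * (K y y :: complex)"
proof -
  have "\<And>a b. ((if a = x then 1 else 0) + (if a = y then w else 0)) * 
      ((if b = x then 1 else 0) + (if b = y then z else 0)) * K a b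
    = (if a = x then 1 else 0) * (if b = x then 1 else 0) * K a b + (if a = x then 1 else 0) * (if b = y then z else 0) * K a b
      + (if a = y then w else 0) * (if b = x then 1 else 0) * K a b + (if a = y then w else 0) * (if b = y then z else 0) * K a b"
    by (simp only: distrib_left distrib_right add_ac)
  then show ?thesis by (simp only: sum.distrib sum2_two_deltas) simp
qed

lemma foldr_comp_Cons: "foldr (\<circ>) (f # fs) g = f \<circ> foldr (\<circ>) fs g"
  by simp

definition matrix_unit :: "'n::finite \<Rightarrow> 'n \<Rightarrow> 'n cmat" where
  "matrix_unit x y = (\<chi> i j. if i = x \<and> j = y then 1 else 0)"

lemma matrix_unit_expansion:
  "X = (\<Sum>x\<in>UNIV. \<Sum>y\<in>UNIV. cscale (X$x$y) (matrix_unit x y))"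
  unfolding vec_eq_iff cscale_def matrix_unit_def by (simp add: sum2_mult_delta)

lemma scaleR_matrix_entry:
  "((r::real) *\<^sub>R M) $ i $ j = complex_of_real r * (M $ i $ j :: complex)"
  by (simp only: scaleR_vec_def vec_lambda_beta) (simp add: scaleR_conv_of_real)

lemma clinear_map_zero: "clinear_map T \<Longrightarrow> T 0 = 0"
  unfolding clinear_map_def by (metis add_cancel_right_right add_0)

lemma clinear_map_sum: "clinear_map T \<Longrightarrow> T (sum f A) = (\<Sum>x\<in>A. T (f x))"
proof (induction A rule: infinite_finite_induct)
  case (infinite A) then show ?case by (simp add: clinear_map_zero)
next
  case empty then show ?case by (simp add: clinear_map_zero)
next
  case (insert x F) then show ?case by (simp add: clinear_map_def)
qed

lemma clinear_map_comp:
  "clinear_map T \<Longrightarrow> clinear_map S \<Longrightarrow> clinear_map (T \<circ> S)"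
  by (simp add: clinear_map_def)

lemma clinear_map_id: "clinear_map (id :: 'n::finite cmat \<Rightarrow> 'n cmat)"
  by (simp add: clinear_map_def)

lemma adjointm_mat_1: "adjointm (mat 1 :: 'n::finite cmat) = mat 1"
  by (simp add: vec_eq_iff adjointm_def mat_def)

lemma unitary_mat_1: "unitary (mat 1 :: 'n::finite cmat)"
  by (simp add: unitary_def adjointm_mat_1)

lemma adjointm_matrix_mult: "adjointm (U ** V) = adjointm V ** adjointm (U :: 'n::finite cmat)"
  by (simp add: vec_eq_iff adjointm_def matrix_matrix_mult_def mult.commute)

lemma unitary_matrix_mult:
  "unitary U \<Longrightarrow> unitary V \<Longrightarrow> unitary (U ** V :: 'n::finite cmat)"
  unfolding unitary_def adjointm_matrix_mult
  by (metis matrix_mul_assoc matrix_mul_rid)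

lemma unitaryI:
  fixes U :: "'n::finite cmat"
  assumes "\<And>i k. (\<Sum>j\<in>UNIV. U$i$j * cnj (U$k$j)) = (if i = k then 1 else 0)"
    and "\<And>j l. (\<Sum>i\<in>UNIV. cnj (U$i$j) * U$i$l) = (if j = l then 1 else 0)"
  shows "unitary U"
  unfolding unitary_def by (simp add: vec_eq_iff matrix_matrix_mult_def adjointm_def mat_def assms)

section \<open>Kernels of Choi states\<close>

definition conjugation_kernel :: "'n::finite cmat \<Rightarrow> 'n \<Rightarrow> 'n \<Rightarrow> 'n \<Rightarrow> 'n \<Rightarrow> complex" where
  "conjugation_kernel M b a e c = M$b$a * cnj (M$e$c)"

definition channel_kernel :: "('n::finite cmat \<Rightarrow> 'n cmat) \<Rightarrow> 'n \<Rightarrow> 'n \<Rightarrow> 'n \<Rightarrow> 'n \<Rightarrow> complex" where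
  "channel_kernel T b a e c = T (matrix_unit a c) $ b $ e"

lemma clinear_map_entry:
  assumes "clinear_map T"
  shows "T X $ b $ e = (\<Sum>x\<in>UNIV. \<Sum>y\<in>UNIV. X$x$y * channel_kernel T b x e y)"
proof -
  have "T X = (\<Sum>x\<in>UNIV. \<Sum>y\<in>UNIV. cscale (X$x$y) (T (matrix_unit x y)))"
    by (subst matrix_unit_expansion) (simp add: clinear_map_sum[OF assms] assms[unfolded clinear_map_def])
  then show ?thesis by (simp add: cscale_def channel_kernel_def)
qed

lemma channel_kernel_comp:
  assumes "clinear_map T"
  shows "channel_kernel (T \<circ> S) b a e c = (\<Sum>x\<in>UNIV. \<Sum>y\<in>UNIV. channel_kernel S x a y c * channel_kernel T b x e y)"
  by (simp add: channel_kernel_def clinear_map_entry[OF assms, of "S (matrix_unit a c)"])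

lemma conjugation_kernel_mult:
  "(\<Sum>x\<in>UNIV. \<Sum>y\<in>UNIV. conjugation_kernel V x a y c * conjugation_kernel U b x e y) = conjugation_kernel (U ** V) b a e c"
  by (simp add: conjugation_kernel_def matrix_matrix_mult_def sum_product mult_ac)

lemma conjugation_kernel_mat_1:
  "conjugation_kernel (mat 1 :: 'n::finite cmat) b a e c = (if b = a \<and> e = c then 1 else 0)"
  by (simp add: conjugation_kernel_def mat_def)

lemma Omega_coeff_sq:
  "complex_of_real (1 / sqrt (real CARD('n::finite))) * cnj (complex_of_real (1 / sqrt (real CARD('n))))
   = complex_of_real (1 / real CARD('n))"
  by (simp flip: of_real_mult)

lemma choi_entry:
  assumes "clinear_map (T :: 'n::finite cmat \<Rightarrow> 'n cmat)"
  shows "choi T $ (a,b) $ (c,e) = complex_of_real (1 / real CARD('n)) * channel_kernel T b a e c"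
proof -
  have "(\<chi> b' e'. ketbra Omega $ (a, b') $ (c, e')) = cscale (complex_of_real (1 / real CARD('n))) (matrix_unit a c :: 'n cmat)"
    by (simp add: vec_eq_iff ketbra_def Omega_def cscale_def matrix_unit_def Omega_coeff_sq[symmetric] flip: of_real_mult)
  moreover have "T (cscale (complex_of_real (1 / real CARD('n))) (matrix_unit a c)) = cscale (complex_of_real (1 / real CARD('n))) (T (matrix_unit a c))"
    using assms unfolding clinear_map_def by blast
  ultimately show ?thesis 
    unfolding choi_def id_tensor_map_def channel_kernel_def by (simp only: vec_lambda_beta fst_conv snd_conv) (simp add: cscale_def)
qed

lemma id_tensor_vec_Omega_entry:
  "id_tensor_vec U (Omega :: complex^('n::finite \<times> 'n)) $ (a,b) = U$b$a * complex_of_real (1 / sqrt (real CARD('n)))"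
proof -
  have "(\<Sum>c\<in>UNIV. U $ b $ c * Omega $ (a, c)) = (\<Sum>c\<in>UNIV. if c = a then U $ b $ c * complex_of_real (1 / sqrt (real CARD('n))) else 0)"
    by (rule sum.cong) (auto simp: Omega_def)
  then show ?thesis by (simp add: id_tensor_vec_def)
qed

lemma unitary_state_entry:
  "ketbra (id_tensor_vec U (Omega :: complex^('n::finite \<times> 'n))) $ (a,b) $ (c,e)
   = complex_of_real (1 / real CARD('n)) * conjugation_kernel U b a e c"
proof -
  let ?w = "complex_of_real (1 / sqrt (real CARD('n)))"
  have "ketbra (id_tensor_vec U (Omega :: complex^('n::finite \<times> 'n))) $ (a,b) $ (c,e)
     = (U$b$a * ?w) * cnj (U$e$c * ?w)" by (simp add: ketbra_def id_tensor_vec_Omega_entry)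
  also have "\<dots> = (?w * cnj ?w) * conjugation_kernel U b a e c" by (simp add: conjugation_kernel_def mult_ac)
  finally show ?thesis by (simp only: Omega_coeff_sq)
qed

lemma choi_sum_scaleR:
  "choi (\<lambda>X. \<Sum>i<k. p i *\<^sub>R T i X) = (\<Sum>i<k. p i *\<^sub>R choi (T i :: 'n::finite cmat \<Rightarrow> 'n cmat))"
  by (simp add: vec_eq_iff choi_def id_tensor_map_def)

section \<open>Weighted lists of unitaries\<close>

text \<open>A list [(r_1,U_1),\<dots>,(r_n,U_n)] stands for the real combination
  \<Sum> r_i \<rho>_{U_i} of maximally entangled states.\<close>

definition list_kernel :: "(real \<times> 'n::finite cmat) list \<Rightarrow> 'n \<Rightarrow> 'n \<Rightarrow> 'n \<Rightarrow> 'n \<Rightarrow> complex" where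
  "list_kernel L b a e c = (\<Sum>(r,U)\<leftarrow>L. complex_of_real r * conjugation_kernel U b a e c)"

definition list_state :: "(real \<times> 'n::finite cmat) list \<Rightarrow> complex^('n \<times> 'n)^('n \<times> 'n)" where
  "list_state L = (\<Sum>(r,U)\<leftarrow>L. r *\<^sub>R ketbra (id_tensor_vec U Omega))"

definition unitary_list :: "(real \<times> 'n::finite cmat) list \<Rightarrow> bool" where
  "unitary_list L \<longleftrightarrow> (\<forall>p\<in>set L. unitary (snd p))"

definition list_weight :: "(real \<times> 'n::finite cmat) list \<Rightarrow> real" where
  "list_weight L = (\<Sum>(r,U)\<leftarrow>L. \<bar>r\<bar>)"

lemma list_kernel_Nil[simp]: "list_kernel [] b a e c = 0" by (simp add: list_kernel_def)

lemma list_kernel_Cons[simp]: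
  "list_kernel ((r,U)#L) b a e c = complex_of_real r * conjugation_kernel U b a e c + list_kernel L b a e c"
  by (simp add: list_kernel_def)

lemma list_state_entry:
  "list_state L $ (a,b) $ (c,e) = complex_of_real (1 / real CARD('n::finite)) * list_kernel (L :: (real \<times> 'n cmat) list) b a e c"
proof (induction L)
  case Nil then show ?case by (simp add: list_state_def list_kernel_def)
next
  case (Cons p L)
  obtain r U where p: "p = (r,U)" by (cases p)
  have "list_state (p # L) = r *\<^sub>R ketbra (id_tensor_vec U Omega) + list_state L" by (simp add: list_state_def p)
  moreover have "list_kernel (p # L) b a e c = complex_of_real r * conjugation_kernel U b a e c + list_kernel L b a e c"
    by (simp add: list_kernel_def p)
  ultimately show ?case using Cons by (simp add: scaleR_matrix_entry unitary_state_entry scaleR_conv_of_real[where 'a=complex] algebra_simps)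
qed

lemma choi_eq_list_state_iff:
  assumes "clinear_map (T :: 'n::finite cmat \<Rightarrow> 'n cmat)"
  shows "choi T = list_state L \<longleftrightarrow> channel_kernel T = list_kernel L"
proof
  assume "choi T = list_state L"
  then have "\<And>a b c e. choi T $ (a,b) $ (c,e) = list_state L $ (a,b) $ (c,e)" by simp
  then show "channel_kernel T = list_kernel L"
    by (simp add: choi_entry[OF assms] list_state_entry fun_eq_iff)
next
  assume "channel_kernel T = list_kernel L"
  then show "choi T = list_state L"
    by (simp add: vec_eq_iff choi_entry[OF assms] list_state_entry)
qed

lemma choi_id: "choi (id :: 'n::finite cmat \<Rightarrow> 'n cmat) = list_state [(1, mat 1)]"
  unfolding choi_eq_list_state_iff[OF clinear_map_id]
  by (simp add: fun_eq_iff channel_kernel_def matrix_unit_def conjugation_kernel_mat_1)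

lemma unitary_list_mat_1: "unitary_list [(1, mat 1 :: 'n::finite cmat)]"
  by (simp add: unitary_list_def unitary_mat_1)

definition scale_list :: "real \<Rightarrow> (real \<times> 'n::finite cmat) list \<Rightarrow> (real \<times> 'n cmat) list" where
  "scale_list u L = map (\<lambda>(c,U). (u*c, U)) L"

lemma list_state_append:
  "list_state (L @ M) = list_state L + list_state M" by (simp add: list_state_def)

lemma list_state_scale_list: "list_state (scale_list u L) = u *\<^sub>R list_state L"
  by (induction L) (auto simp: list_state_def scale_list_def scaleR_add_right)

lemma list_weight_append:
  "list_weight (L @ M) = list_weight L + list_weight M" by (simp add: list_weight_def)

lemma list_weight_scale_list: "list_weight (scale_list u L) = \<bar>u\<bar> * list_weight L"
  by (induction L) (auto simp: list_weight_def scale_list_def abs_mult algebra_simps)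

lemma unitary_list_append:
  "unitary_list (L @ M) \<longleftrightarrow> unitary_list L \<and> unitary_list M" by (auto simp: unitary_list_def)

lemma unitary_list_scale_list:
  "unitary_list (scale_list u L) = unitary_list L" by (auto simp: unitary_list_def scale_list_def)

lemma list_weight_nonneg: "list_weight L \<ge> 0" by (induction L) (auto simp: list_weight_def)

lemma list_kernel_append:
  "list_kernel (L @ M) = (\<lambda>b a e c. list_kernel L b a e c + list_kernel M b a e c)"
  by (simp add: list_kernel_def fun_eq_iff)

lemma list_kernel_scale_list:
  "list_kernel (scale_list u L) = (\<lambda>b a e c. complex_of_real u * list_kernel L b a e c)"
  by (induction L) (auto simp: list_kernel_def scale_list_def fun_eq_iff algebra_simps)

definition product_list :: "(real \<times> 'n::finite cmat) list \<Rightarrow> (real \<times> 'n cmat) list \<Rightarrow> (real \<times> 'n cmat) list" where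
  "product_list L M = concat (map (\<lambda>(c,U). map (\<lambda>(e,V). (c*e, U ** V)) M) L)"

lemma list_kernel_product_single:
  "(\<Sum>x\<in>UNIV. \<Sum>y\<in>UNIV. list_kernel M x a y c * (complex_of_real r * conjugation_kernel U b x e y))
   = list_kernel (map (\<lambda>(e,V). (r*e, U ** V)) M) b a e c"
proof (induction M)
  case Nil then show ?case by simp
next
  case (Cons q M)
  obtain t V where q: "q = (t,V)" by (cases q)
  have "(\<Sum>x\<in>UNIV. \<Sum>y\<in>UNIV. list_kernel (q # M) x a y c * (complex_of_real r * conjugation_kernel U b x e y))
     = complex_of_real (r * t) * (\<Sum>x\<in>UNIV. \<Sum>y\<in>UNIV. conjugation_kernel V x a y c * conjugation_kernel U b x e y)
       + (\<Sum>x\<in>UNIV. \<Sum>y\<in>UNIV. list_kernel M x a y c * (complex_of_real r * conjugation_kernel U b x e y))"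
    by (simp add: q sum_distrib_left sum.distrib algebra_simps)
  also have "\<dots> = list_kernel (map (\<lambda>(e,V). (r*e, U ** V)) (q # M)) b a e c"
    by (simp add: conjugation_kernel_mult Cons.IH q)
  finally show ?case .
qed

lemma list_kernel_product:
  "(\<Sum>x\<in>UNIV. \<Sum>y\<in>UNIV. list_kernel M x a y c * list_kernel L b x e y) = list_kernel (product_list L M) b a e c"
proof (induction L)
  case Nil then show ?case by (simp add: product_list_def)
next
  case (Cons p L)
  obtain r U where p: "p = (r,U)" by (cases p)
  have "(\<Sum>x\<in>UNIV. \<Sum>y\<in>UNIV. list_kernel M x a y c * list_kernel (p # L) b x e y)
     = (\<Sum>x\<in>UNIV. \<Sum>y\<in>UNIV. list_kernel M x a y c * (complex_of_real r * conjugation_kernel U b x e y))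
       + (\<Sum>x\<in>UNIV. \<Sum>y\<in>UNIV. list_kernel M x a y c * list_kernel L b x e y)"
    by (simp add: p sum.distrib algebra_simps)
  also have "\<dots> = list_kernel (product_list (p # L) M) b a e c"
    by (simp add: list_kernel_product_single Cons.IH p product_list_def list_kernel_append)
  finally show ?case .
qed

lemma unitary_list_product_list:
  "unitary_list L \<Longrightarrow> unitary_list M \<Longrightarrow> unitary_list (product_list L M)"
  by (fastforce simp: unitary_list_def product_list_def intro!: unitary_matrix_mult)

lemma list_weight_product_list: "list_weight (product_list L M) = list_weight L * list_weight M"
proof (induction L)
  case Nil then show ?case by (simp add: list_weight_def product_list_def)
next
  case (Cons p L)
  obtain r U where p: "p = (r,U)" by (cases p)
  have "list_weight (map (\<lambda>(e,V). (r*e, U ** V)) M) = \<bar>r\<bar> * list_weight M"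
    by (induction M) (auto simp: list_weight_def abs_mult algebra_simps)
  then show ?case using Cons by (simp add: p product_list_def list_weight_def algebra_simps)
qed

lemma choi_comp_product_list:
  assumes "clinear_map T" "clinear_map S" "choi T = list_state L" "choi S = list_state M"
  shows "choi (T \<circ> S) = list_state (product_list L M)"
proof -
  have kt: "channel_kernel T = list_kernel L" and ks: "channel_kernel S = list_kernel M"
    using assms choi_eq_list_state_iff by blast+
  have "channel_kernel (T \<circ> S) = list_kernel (product_list L M)"
    by (simp add: fun_eq_iff channel_kernel_comp[OF assms(1)] kt ks list_kernel_product)
  then show ?thesis using choi_eq_list_state_iff[OF clinear_map_comp[OF assms(1,2)]] by blast
qed

definition mixture_list :: "(nat \<Rightarrow> real) \<Rightarrow> (nat \<Rightarrow> (real \<times> 'n::finite cmat) list) \<Rightarrow> nat \<Rightarrow> (real \<times> 'n cmat) list" where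
  "mixture_list p Ls k = concat (map (\<lambda>i. scale_list (p i) (Ls i)) [0..<k])"

lemma mixture_list_Suc: "mixture_list p Ls (Suc k) = mixture_list p Ls k @ scale_list (p k) (Ls k)"
  by (simp add: mixture_list_def)

lemma unitary_list_mixture_list:
  "(\<And>i. i < k \<Longrightarrow> unitary_list (Ls i)) \<Longrightarrow> unitary_list (mixture_list p Ls k)"
  by (fastforce simp: mixture_list_def unitary_list_def scale_list_def)

lemma list_state_mixture_list:
  "list_state (mixture_list p Ls k) = (\<Sum>i<k. p i *\<^sub>R list_state (Ls i))"
  by (induction k) (simp_all add: mixture_list_Suc list_state_append list_state_scale_list,
      simp add: mixture_list_def list_state_def)

lemma list_weight_mixture_list:
  "list_weight (mixture_list p Ls k) = (\<Sum>i<k. \<bar>p i\<bar> * list_weight (Ls i))"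
  by (induction k) (simp_all add: mixture_list_Suc list_weight_append list_weight_scale_list,
      simp add: mixture_list_def list_weight_def)

section \<open>Decompositions and the norm\<close>

lemma unitary_state_in_Ucal: "unitary U \<Longrightarrow> ketbra (id_tensor_vec U Omega) \<in> Ucal"
  unfolding Ucal_def by (rule hull_inc) blast

lemma list_state_Ucal_decomposition:
  fixes L :: "(real \<times> 'n::finite cmat) list"
  assumes "unitary_list L"
  obtains ap an sp sn where "ap \<ge> 0" "an \<ge> 0" "sp \<in> Ucal" "sn \<in> Ucal"
    "list_state L = ap *\<^sub>R sp - an *\<^sub>R sn" "ap + an = list_weight L"
  using assms
proof (induction L arbitrary: thesis)
  case Nil
  show ?case
    by (rule Nil.prems(1)[of 0 0]) (auto simp: list_state_def list_weight_def intro: unitary_state_in_Ucal[OF unitary_mat_1])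
next
  case (Cons p L)
  obtain r U where p: "p = (r,U)" by (cases p)
  let ?K = "ketbra (id_tensor_vec U Omega)"
  have K: "?K \<in> Ucal" and L: "unitary_list L"
    using Cons.prems(2) p unitary_state_in_Ucal by (auto simp: unitary_list_def)
  obtain ap an sp sn where IH: "ap \<ge> 0" "an \<ge> 0" "sp \<in> Ucal" "sn \<in> Ucal"
    "list_state L = ap *\<^sub>R sp - an *\<^sub>R sn" "ap + an = list_weight L"
    using Cons.IH[OF _ L] by blast
  have state: "list_state (p # L) = r *\<^sub>R ?K + list_state L"
    and weight: "list_weight (p # L) = \<bar>r\<bar> + list_weight L"
    by (simp_all add: list_state_def list_weight_def p)
  have convex: "convex (Ucal :: (complex^('n \<times> 'n)^('n \<times> 'n)) set)"
    unfolding Ucal_def by simp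
  show ?case
  proof (cases "r \<ge> 0")
    case True
    obtain sp' where sp': "sp' \<in> Ucal" "ap *\<^sub>R sp + r *\<^sub>R ?K = (ap + r) *\<^sub>R sp'"
      using convex_scaleR_add_obtain[OF convex IH(3) K IH(1) True] .
    have "list_state (p # L) = (ap *\<^sub>R sp + r *\<^sub>R ?K) - an *\<^sub>R sn"
      using state IH(5) by (simp add: algebra_simps)
    then have "list_state (p # L) = (ap + r) *\<^sub>R sp' - an *\<^sub>R sn"
      by (simp only: sp'(2))
    then show ?thesis using IH True weight sp'(1)
      by (intro Cons.prems(1)[of "ap + r" an sp' sn]) auto
  next
    case False
    then have "- r \<ge> 0" by simp
    obtain sn' where sn': "sn' \<in> Ucal" "an *\<^sub>R sn + (- r) *\<^sub>R ?K = (an + - r) *\<^sub>R sn'"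
      using convex_scaleR_add_obtain[OF convex IH(4) K IH(2) \<open>- r \<ge> 0\<close>] .
    have "list_state (p # L) = ap *\<^sub>R sp - (an *\<^sub>R sn + (- r) *\<^sub>R ?K)"
      using state IH(5) by (simp add: algebra_simps)
    then have "list_state (p # L) = ap *\<^sub>R sp - (an - r) *\<^sub>R sn'"
      by (simp only: sn'(2) diff_conv_add_uminus)
    then show ?thesis using IH False weight sn'(1)
      by (intro Cons.prems(1)[of ap "an - r" sp sn']) auto
  qed
qed

lemma Ucal_list_representation:
  fixes s :: "complex^('n::finite \<times> 'n)^('n \<times> 'n)"
  assumes "s \<in> Ucal"
  obtains L where "unitary_list L" "\<forall>p\<in>set L. fst p \<ge> 0" "list_weight L = 1" "list_state L = s"
proof -
  let ?Q = "{list_state L | L :: (real \<times> 'n cmat) list.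
              unitary_list L \<and> (\<forall>p\<in>set L. fst p \<ge> 0) \<and> list_weight L = 1}"
  have "convex ?Q"
  proof (rule convexI)
    fix x y :: "complex^('n \<times> 'n)^('n \<times> 'n)" and u v :: real
    assume "x \<in> ?Q" "y \<in> ?Q" and uv: "0 \<le> u" "0 \<le> v" "u + v = 1"
    then obtain L M where L: "unitary_list L" "\<forall>p\<in>set L. fst p \<ge> 0" "list_weight L = 1" "x = list_state L"
      and M: "unitary_list M" "\<forall>p\<in>set M. fst p \<ge> 0" "list_weight M = 1" "y = list_state M" by blast
    let ?N = "scale_list u L @ scale_list v M"
    have "unitary_list ?N" using L M by (simp add: unitary_list_append unitary_list_scale_list)
    moreover have "\<forall>p\<in>set ?N. fst p \<ge> 0" using L M uv by (auto simp: scale_list_def)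
    moreover have "list_weight ?N = 1" using L M uv by (simp add: list_weight_append list_weight_scale_list)
    moreover have "list_state ?N = u *\<^sub>R x + v *\<^sub>R y" using L M by (simp add: list_state_append list_state_scale_list)
    ultimately show "u *\<^sub>R x + v *\<^sub>R y \<in> ?Q" by (intro CollectI exI[of _ ?N]) auto
  qed
  moreover have "{ketbra (id_tensor_vec U Omega) | U :: 'n cmat. unitary U} \<subseteq> ?Q"
  proof
    fix x assume "x \<in> {ketbra (id_tensor_vec U Omega) | U :: 'n cmat. unitary U}"
    then obtain U where "unitary U" "x = ketbra (id_tensor_vec U Omega)" by blast
    then have "unitary_list [(1, U)]" "list_weight [(1, U)] = 1" "list_state [(1, U)] = x"
      by (auto simp: unitary_list_def list_weight_def list_state_def)
    then show "x \<in> ?Q" by force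
  qed
  ultimately have "Ucal \<subseteq> ?Q" unfolding Ucal_def by (simp add: hull_minimal)
  then show ?thesis using assms that by blast
qed

definition decomposition_weights :: "('n::finite cmat \<Rightarrow> 'n cmat) \<Rightarrow> real set" where
  "decomposition_weights T = {list_weight L | L. unitary_list L \<and> choi T = list_state L}"

definition unitary_decomposable :: "('n::finite cmat \<Rightarrow> 'n cmat) \<Rightarrow> bool" where
  "unitary_decomposable T \<longleftrightarrow> (\<exists>L. unitary_list L \<and> choi T = list_state L)"

lemma normU_eq_Inf_decomposition_weights: "normU T = Inf (decomposition_weights T)"
proof -
  have "{ap + an | ap an sp sn. ap \<ge> 0 \<and> an \<ge> 0 \<and> sp \<in> Ucal \<and> sn \<in> Ucal \<and>
          choi T = ap *\<^sub>R sp - an *\<^sub>R sn} = decomposition_weights T" (is "?S = _")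
  proof
    show "?S \<subseteq> decomposition_weights T"
    proof
      fix w assume "w \<in> ?S"
      then obtain ap an sp sn where w: "w = ap + an" "ap \<ge> 0" "an \<ge> 0" "sp \<in> Ucal" "sn \<in> Ucal"
        "choi T = ap *\<^sub>R sp - an *\<^sub>R sn" by blast
      obtain Lp where Lp: "unitary_list Lp" "list_weight Lp = 1" "list_state Lp = sp"
        using Ucal_list_representation[OF w(4)] by blast
      obtain Ln where Ln: "unitary_list Ln" "list_weight Ln = 1" "list_state Ln = sn"
        using Ucal_list_representation[OF w(5)] by blast
      let ?L = "scale_list ap Lp @ scale_list (- an) Ln"
      have "unitary_list ?L" "choi T = list_state ?L" "list_weight ?L = w"
        using w Lp Ln by (simp_all add: unitary_list_append unitary_list_scale_list
            list_state_append list_state_scale_list list_weight_append list_weight_scale_list)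
      then show "w \<in> decomposition_weights T" unfolding decomposition_weights_def by blast
    qed
    show "decomposition_weights T \<subseteq> ?S"
    proof
      fix w assume "w \<in> decomposition_weights T"
      then obtain L where L: "w = list_weight L" "unitary_list L" "choi T = list_state L"
        unfolding decomposition_weights_def by blast
      obtain ap an sp sn where "ap \<ge> 0" "an \<ge> 0" "sp \<in> Ucal" "sn \<in> Ucal"
        "list_state L = ap *\<^sub>R sp - an *\<^sub>R sn" "ap + an = list_weight L"
        using list_state_Ucal_decomposition[OF L(2)] .
      then show "w \<in> ?S" using L(1,3) by (intro CollectI exI conjI) auto
    qed
  qed
  then show ?thesis by (simp add: normU_def)
qed

lemma normU_le_list_weight:
  "unitary_list L \<Longrightarrow> choi T = list_state L \<Longrightarrow> normU T \<le> list_weight L"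
  unfolding normU_eq_Inf_decomposition_weights decomposition_weights_def
  by (rule cInf_lower) (auto intro!: bdd_belowI[of _ 0] list_weight_nonneg)

lemma normU_nonneg: "unitary_decomposable T \<Longrightarrow> normU T \<ge> 0"
  unfolding normU_eq_Inf_decomposition_weights decomposition_weights_def unitary_decomposable_def
  by (rule cInf_greatest) (auto intro: list_weight_nonneg)

lemma normU_approx_by_list:
  assumes "unitary_decomposable T" "\<epsilon> > 0"
  obtains L where "unitary_list L" "choi T = list_state L" "list_weight L < normU T + \<epsilon>"
proof -
  have "decomposition_weights T \<noteq> {}"
    using assms(1) unfolding unitary_decomposable_def decomposition_weights_def by blast
  moreover have "Inf (decomposition_weights T) < normU T + \<epsilon>"
    using assms(2) by (simp add: normU_eq_Inf_decomposition_weights)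
  ultimately obtain w where "w \<in> decomposition_weights T" "w < normU T + \<epsilon>"
    using cInf_lessD by blast
  then show ?thesis using that unfolding decomposition_weights_def by blast
qed

lemma unitary_decomposable_comp:
  assumes "clinear_map T" "clinear_map S" "unitary_decomposable T" "unitary_decomposable S"
  shows "unitary_decomposable (T \<circ> S)"
  using assms choi_comp_product_list unitary_list_product_list
  unfolding unitary_decomposable_def by metis

lemma normU_comp_le:
  assumes "clinear_map T" "clinear_map S" "unitary_decomposable T" "unitary_decomposable S"
  shows "normU (T \<circ> S) \<le> normU T * normU S"
proof -
  have product: "normU (T \<circ> S) \<le> x * y"
    if "x \<in> decomposition_weights T" "y \<in> decomposition_weights S" for x y
    using that normU_le_list_weight[OF unitary_list_product_list choi_comp_product_list[OF assms(1,2)]]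
    unfolding decomposition_weights_def by (auto simp: list_weight_product_list)
  have nonempty: "decomposition_weights T \<noteq> {}" "decomposition_weights S \<noteq> {}"
    using assms(3,4) unfolding unitary_decomposable_def decomposition_weights_def by auto
  have "normU (T \<circ> S) \<le> y * normU T" if "y \<in> decomposition_weights S" for y
    unfolding normU_eq_Inf_decomposition_weights[of T]
    using that product by (intro le_mult_Inf[OF nonempty(1)])
      (auto simp: decomposition_weights_def list_weight_nonneg mult.commute)
  then show ?thesis
    unfolding normU_eq_Inf_decomposition_weights[of S]
    by (intro le_mult_Inf[OF nonempty(2)]) (auto simp: mult.commute normU_nonneg[OF assms(3)])
qed

lemma foldr_comp_clinear_map_unitary_decomposable:
  fixes Ts :: "('n::finite cmat \<Rightarrow> 'n cmat) list"
  assumes "\<forall>S\<in>set Ts. clinear_map S \<and> unitary_decomposable S"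
  shows "clinear_map (foldr (\<circ>) Ts id) \<and> unitary_decomposable (foldr (\<circ>) Ts id)"
  using assms
proof (induction Ts)
  case Nil
  then show ?case
    using clinear_map_id choi_id unitary_list_mat_1 by (auto simp: unitary_decomposable_def id_def)
next
  case (Cons T Ts)
  have T: "clinear_map T" "unitary_decomposable T" and F: "clinear_map (foldr (\<circ>) Ts id)" "unitary_decomposable (foldr (\<circ>) Ts id)"
    using Cons by (meson list.set_intros)+
  show ?case
    unfolding foldr_comp_Cons using clinear_map_comp[OF T(1) F(1)] unitary_decomposable_comp[OF T(1) F(1) T(2) F(2)] ..
qed

lemma normU_foldr_comp_le:
  fixes Ts :: "('n::finite cmat \<Rightarrow> 'n cmat) list"
  assumes "\<forall>S\<in>set Ts. clinear_map S \<and> unitary_decomposable S"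
  shows "normU (foldr (\<circ>) Ts id) \<le> prod_list (map normU Ts)"
  using assms
proof (induction Ts)
  case Nil
  show ?case
    using normU_le_list_weight[OF unitary_list_mat_1 choi_id] by (simp add: list_weight_def id_def)
next
  case (Cons T Ts)
  let ?F = "foldr (\<circ>) Ts id"
  have T: "clinear_map T" "unitary_decomposable T" and F: "clinear_map ?F" "unitary_decomposable ?F"
    using Cons.prems foldr_comp_clinear_map_unitary_decomposable[of Ts] by auto
  have "normU (T \<circ> ?F) \<le> normU T * normU ?F"
    by (rule normU_comp_le[OF T(1) F(1) T(2) F(2)])
  also have "\<dots> \<le> normU T * prod_list (map normU Ts)"
    using Cons normU_nonneg[OF T(2)] by (meson list.set_intros(2) mult_left_mono)
  finally show ?case unfolding foldr_comp_Cons list.map prod_list.Cons .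
qed

lemma normU_sum_scaleR_le:
  fixes T :: "nat \<Rightarrow> ('n::finite cmat \<Rightarrow> 'n cmat)"
  assumes T: "\<And>i. i < k \<Longrightarrow> unitary_decomposable (T i)" and p: "\<And>i. i < k \<Longrightarrow> p i \<ge> 0"
  shows "normU (\<lambda>X. \<Sum>i<k. p i *\<^sub>R T i X) \<le> (\<Sum>i<k. p i * normU (T i))"
proof (rule field_le_epsilon)
  fix \<epsilon> :: real assume "\<epsilon> > 0"
  define \<delta> where "\<delta> = \<epsilon> / (1 + (\<Sum>i<k. p i))"
  have p_sum: "(\<Sum>i<k. p i) \<ge> 0" using p by (intro sum_nonneg) auto
  then have "\<delta> > 0" using \<open>\<epsilon> > 0\<close> by (simp add: \<delta>_def)
  have "\<exists>L. unitary_list L \<and> choi (T i) = list_state L \<and> list_weight L < normU (T i) + \<delta>"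
    if "i < k" for i
    using normU_approx_by_list[OF T[OF that] \<open>\<delta> > 0\<close>] by blast
  then obtain Ls where Ls: "\<And>i. i < k \<Longrightarrow>
      unitary_list (Ls i) \<and> choi (T i) = list_state (Ls i) \<and> list_weight (Ls i) < normU (T i) + \<delta>"
    by metis
  have "choi (\<lambda>X. \<Sum>i<k. p i *\<^sub>R T i X) = list_state (mixture_list p Ls k)"
    using Ls by (simp add: choi_sum_scaleR list_state_mixture_list)
  then have "normU (\<lambda>X. \<Sum>i<k. p i *\<^sub>R T i X) \<le> list_weight (mixture_list p Ls k)"
    using Ls by (intro normU_le_list_weight unitary_list_mixture_list) auto
  also have "\<dots> = (\<Sum>i<k. p i * list_weight (Ls i))"
    using p by (simp add: list_weight_mixture_list)
  also have "\<dots> \<le> (\<Sum>i<k. p i * (normU (T i) + \<delta>))"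
    by (rule sum_mono) (use p Ls in \<open>auto intro: mult_left_mono less_imp_le\<close>)
  also have "\<dots> = (\<Sum>i<k. p i * normU (T i)) + \<delta> * (\<Sum>i<k. p i)"
    by (simp add: distrib_left sum.distrib sum_distrib_left mult.commute)
  also have "\<dots> \<le> (\<Sum>i<k. p i * normU (T i)) + \<epsilon>"
    using p_sum \<open>\<epsilon> > 0\<close> by (simp add: \<delta>_def field_simps)
  finally show "normU (\<lambda>X. \<Sum>i<k. p i *\<^sub>R T i X) \<le> (\<Sum>i<k. p i * normU (T i)) + \<epsilon>" .
qed

section \<open>Choi kernels of unital channels\<close>

definition quad_form :: "'n::finite cmat \<Rightarrow> complex^'n \<Rightarrow> complex" where
  "quad_form Y v = (\<Sum>a\<in>UNIV. cnj (v$a) * (Y *v v)$a)"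

lemma quad_form_entries:
  "quad_form Y v = (\<Sum>a\<in>UNIV. \<Sum>b\<in>UNIV. cnj (v$a) * v$b * Y$a$b)"
  by (simp add: quad_form_def matrix_vector_mult_def sum_distrib_left mult_ac)

lemma quad_form_ketbra:
  "quad_form (ketbra w) v = (\<Sum>a\<in>UNIV. cnj (v$a) * w$a) * cnj (\<Sum>a\<in>UNIV. cnj (v$a) * w$a)"
  by (simp add: quad_form_def ketbra_def matrix_vector_mult_def sum_distrib_left sum_product mult_ac)

lemma psd_block_ketbra: "psd_block 1 (\<lambda>i j. ketbra w)"
proof -
  have "Im (quad_form (ketbra w) v) = 0 \<and> Re (quad_form (ketbra w) v) \<ge> 0" for v
    unfolding quad_form_ketbra complex_mult_cnj by simp
  then show ?thesis by (simp add: psd_block_def quad_form_def Let_def)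
qed

lemma psd_block_quad_form_real:
  "psd_block 1 (\<lambda>i j. Y) \<Longrightarrow> Im (quad_form Y v) = 0"
  unfolding psd_block_def quad_form_def Let_def by (drule spec[of _ "\<lambda>_. v"]) simp

definition two_point_vec :: "'n::finite \<Rightarrow> complex \<Rightarrow> 'n \<Rightarrow> complex^'n" where
  "two_point_vec x z y = (\<chi> a. (if a = x then 1 else 0) + (if a = y then z else 0))"

lemma two_point_vec_nth:
  "two_point_vec x z y $ a = (if a = x then 1 else 0) + (if a = y then z else 0)"
  by (simp add: two_point_vec_def)

lemma cnj_two_point_vec_nth:
  "cnj (two_point_vec x z y $ a) = (if a = x then 1 else 0) + (if a = y then cnj z else 0)"
  by (simp add: two_point_vec_def)

lemma quad_form_two_point_vec:
  "quad_form Y (two_point_vec x z y) = Y$x$x + z * Y$x$y + cnj z * Y$y$x + cnj z * z * Y$y$y"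
  unfolding quad_form_entries cnj_two_point_vec_nth unfolding two_point_vec_nth by (rule sum2_two_point)

lemma hermitian_if_quad_form_real:
  assumes "\<And>v. Im (quad_form Y v) = 0"
  shows "Y$y$x = cnj (Y$x$y)"
proof -
  have diag: "Im (Y$x$x) = 0" "Im (Y$y$y) = 0"
    using assms[of "two_point_vec x 0 y"] assms[of "two_point_vec y 0 x"] by (simp_all add: quad_form_two_point_vec)
  have "Im (Y$x$y + Y$y$x) = 0"
    using assms[of "two_point_vec x 1 y"] diag by (simp add: quad_form_two_point_vec)
  moreover have "Re (Y$x$y) = Re (Y$y$x)"
    using assms[of "two_point_vec x \<i> y"] diag by (simp add: quad_form_two_point_vec)
  ultimately show ?thesis by (simp add: complex_eq_iff)
qed

lemma channel_two_point_entry: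
  assumes "clinear_map T"
  shows "T (ketbra (two_point_vec a z c)) $ b $ e = channel_kernel T b a e a + cnj z * channel_kernel T b a e c
           + z * channel_kernel T b c e a + z * cnj z * channel_kernel T b c e c"
proof -
  have "T (ketbra (two_point_vec a z c)) $ b $ e = (\<Sum>x\<in>UNIV. \<Sum>y\<in>UNIV. ((if x = a then 1 else 0) + (if x = c then z else 0)) *
      ((if y = a then 1 else 0) + (if y = c then cnj z else 0)) * channel_kernel T b x e y)"
    unfolding clinear_map_entry[OF assms] ketbra_def vec_lambda_beta unfolding cnj_two_point_vec_nth unfolding two_point_vec_nth by simp
  then show ?thesis by (simp only: sum2_two_point)
qed

lemma channel_kernel_hermitian:
  assumes lin: "clinear_map T" and cp: "completely_positive T"
  shows "channel_kernel T e c b a = cnj (channel_kernel T b a e c)"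
proof -
  have herm: "T (ketbra w) $ y $ x = cnj (T (ketbra w) $ x $ y)" for w x y
  proof (rule hermitian_if_quad_form_real)
    fix v
    have "psd_block 1 (\<lambda>i j. T (ketbra w))" using cp psd_block_ketbra[of w] unfolding completely_positive_def by blast
    then show "Im (quad_form (T (ketbra w)) v) = 0" by (rule psd_block_quad_form_real)
  qed
  have diag: "channel_kernel T e a b a = cnj (channel_kernel T b a e a)" for a b e
    using herm[of "two_point_vec a 0 a" e b] by (simp add: channel_two_point_entry[OF lin])
  define P where "P = channel_kernel T e c b a"
  define Q where "Q = channel_kernel T e a b c"
  define p where "p = cnj (channel_kernel T b a e c)"
  define q where "q = cnj (channel_kernel T b c e a)"
  have sum: "Q + P = p + q"
    using herm[of "two_point_vec a 1 c" e b] diag[of e a b] diag[of e c b]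
    by (simp add: channel_two_point_entry[OF lin] P_def Q_def p_def q_def)
  have "\<i> * (P - Q) = \<i> * (p - q)"
    using herm[of "two_point_vec a \<i> c" e b] diag[of e a b] diag[of e c b]
    by (simp add: channel_two_point_entry[OF lin] P_def Q_def p_def q_def algebra_simps)
  then have diff: "P - Q = p - q" by simp
  have "2 * P = 2 * p" using arg_cong2[OF sum diff, of "(+)"] by (simp add: algebra_simps)
  then have "P = p" by simp
  then show ?thesis by (simp add: P_def p_def)
qed

lemma channel_kernel_unital:
  assumes "clinear_map T" "T (mat 1) = mat 1"
  shows "(\<Sum>a\<in>UNIV. channel_kernel T b a e a) = (if b = e then 1 else 0)"
proof -
  have "T (mat 1) $ b $ e = (\<Sum>x\<in>UNIV. \<Sum>y\<in>UNIV. (if x = y then 1 else 0) * channel_kernel T b x e y)"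
    unfolding clinear_map_entry[OF assms(1)] by (simp add: mat_def)
  also have "\<dots> = (\<Sum>a\<in>UNIV. channel_kernel T b a e a)"
    by (rule sum.cong) (simp_all add: if_one_zero_mult)
  finally show ?thesis using assms(2) by (simp add: mat_def)
qed

lemma channel_kernel_trace_preserving:
  assumes "\<And>A. trace_m (T A) = trace_m A"
  shows "(\<Sum>b\<in>UNIV. channel_kernel T b a b c) = (if a = c then 1 else 0)"
proof -
  have "(\<Sum>b\<in>UNIV. channel_kernel T b a b c) = trace_m (T (matrix_unit a c))" by (simp add: trace_m_def channel_kernel_def)
  also have "\<dots> = trace_m (matrix_unit a c :: 'a cmat)" by (rule assms)
  also have "\<dots> = (if a = c then 1 else 0)"
    by (cases "a = c") (auto simp: trace_m_def matrix_unit_def intro!: sum.neutral)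
  finally show ?thesis .
qed

section \<open>The real span of conjugation kernels\<close>

definition kernel_span :: "('n::finite \<Rightarrow> 'n \<Rightarrow> 'n \<Rightarrow> 'n \<Rightarrow> complex) set" where
  "kernel_span = {K. \<exists>L. unitary_list L \<and> K = list_kernel L}"

lemma kernel_span_add:
  "K1 \<in> kernel_span \<Longrightarrow> K2 \<in> kernel_span \<Longrightarrow> (\<lambda>b a e c. K1 b a e c + K2 b a e c) \<in> kernel_span"
proof -
  assume "K1 \<in> kernel_span" "K2 \<in> kernel_span"
  then obtain L M where "unitary_list L" "K1 = list_kernel L" "unitary_list M" "K2 = list_kernel M" unfolding kernel_span_def by blast
  then have "unitary_list (L @ M)" "(\<lambda>b a e c. K1 b a e c + K2 b a e c) = list_kernel (L @ M)"
    by (simp_all add: unitary_list_append list_kernel_append)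
  then show ?thesis unfolding kernel_span_def by blast
qed

lemma kernel_span_scale:
  "K \<in> kernel_span \<Longrightarrow> (\<lambda>b a e c. complex_of_real r * K b a e c) \<in> kernel_span"
proof -
  assume "K \<in> kernel_span"
  then obtain L where "unitary_list L" "K = list_kernel L" unfolding kernel_span_def by blast
  then have "unitary_list (scale_list r L)" "(\<lambda>b a e c. complex_of_real r * K b a e c) = list_kernel (scale_list r L)"
    by (simp_all add: unitary_list_scale_list list_kernel_scale_list)
  then show ?thesis unfolding kernel_span_def by blast
qed

lemma conjugation_kernel_in_span:
  "unitary U \<Longrightarrow> conjugation_kernel U \<in> kernel_span"
  unfolding kernel_span_def by (rule CollectI, rule exI[of _ "[(1,U)]"]) (simp add: unitary_list_def fun_eq_iff)

lemma kernel_span_zero: "(\<lambda>b a e c. 0) \<in> kernel_span"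
  unfolding kernel_span_def by (rule CollectI, rule exI[of _ "[]"]) (simp add: unitary_list_def fun_eq_iff)

lemma kernel_span_diff:
  "K1 \<in> kernel_span \<Longrightarrow> K2 \<in> kernel_span \<Longrightarrow> (\<lambda>b a e c. K1 b a e c - K2 b a e c) \<in> kernel_span"
  using kernel_span_add[OF _ kernel_span_scale[of K2 "-1"], of K1] by simp

lemma kernel_span_cong:
  "K \<in> kernel_span \<Longrightarrow> (\<And>b a e c. K b a e c = K' b a e c) \<Longrightarrow> K' \<in> kernel_span"
proof -
  assume "K \<in> kernel_span" "\<And>b a e c. K b a e c = K' b a e c"
  then have "K = K'" by (simp add: fun_eq_iff)
  then show "K' \<in> kernel_span" using \<open>K \<in> kernel_span\<close> by simp
qed

lemma kernel_span_sum:
  assumes "finite A" "\<And>i. i \<in> A \<Longrightarrow> f i \<in> kernel_span"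
  shows "(\<lambda>b a e c. \<Sum>i\<in>A. f i b a e c) \<in> kernel_span"
  using assms
proof (induction A rule: finite_induct)
  case empty then show ?case by (simp add: kernel_span_zero)
next
  case (insert x F)
  then show ?case using kernel_span_add[of "f x" "\<lambda>b a e c. \<Sum>i\<in>F. f i b a e c"] by simp
qed

definition unitary2 :: "complex \<Rightarrow> complex \<Rightarrow> complex \<Rightarrow> complex \<Rightarrow> bool" where
  "unitary2 p q r t \<longleftrightarrow> p*cnj p + q*cnj q = 1 \<and> r*cnj r + t*cnj t = 1 \<and> p*cnj r + q*cnj t = 0 \<and>
     cnj p*p + cnj r*r = 1 \<and> cnj q*q + cnj t*t = 1 \<and> cnj p*q + cnj r*t = 0"

lemma unitary2_uminus: "unitary2 (-p) (-q) (-r) (-t) = unitary2 p q r t" by (simp add: unitary2_def)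

lemma unitary2_sign_flips:
  "unitary2 p q r t \<Longrightarrow> unitary2 p q (-r) (-t) \<and> unitary2 p (-q) r (-t) \<and> unitary2 p (-q) (-r) t"
  by (simp add: unitary2_def add_eq_0_iff)

text \<open>The 2\<times>2 block [[p,q],[r,t]] placed in rows x1, x2 and columns y1, y2, completed by the
  permutation matrix of \<sigma> in the other columns.  Two such unitaries with the same \<sigma> have
  kernels whose difference only involves the blocks.\<close>

definition embed_unitary2 :: "'n::finite \<Rightarrow> 'n \<Rightarrow> 'n \<Rightarrow> 'n \<Rightarrow> ('n \<Rightarrow> 'n) \<Rightarrow> complex \<Rightarrow> complex \<Rightarrow> complex \<Rightarrow> complex \<Rightarrow> 'n cmat" where
  "embed_unitary2 x1 x2 y1 y2 \<sigma> p q r t = (\<chi> i j. if j = y1 then (if i = x1 then p else if i = x2 then r else 0)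
     else if j = y2 then (if i = x1 then q else if i = x2 then t else 0) else (if i = \<sigma> j then 1 else 0))"

definition block2 :: "'n::finite \<Rightarrow> 'n \<Rightarrow> 'n \<Rightarrow> 'n \<Rightarrow> complex \<Rightarrow> complex \<Rightarrow> complex \<Rightarrow> complex \<Rightarrow> 'n cmat" where
  "block2 x1 x2 y1 y2 p q r t = (\<chi> i j. if j = y1 then (if i = x1 then p else if i = x2 then r else 0)
     else if j = y2 then (if i = x1 then q else if i = x2 then t else 0) else 0)"

context
  fixes x1 x2 y1 y2 :: "'n::finite" and \<sigma> :: "'n \<Rightarrow> 'n" and p q r t :: complex
  assumes x: "x1 \<noteq> x2" and y: "y1 \<noteq> y2" and bij: "bij \<sigma>" and s1: "\<sigma> y1 = x1" and s2: "\<sigma> y2 = x2"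
    and u: "unitary2 p q r t"
begin

lemma embed_unitary2_rows_orthonormal:
  defines "U \<equiv> embed_unitary2 x1 x2 y1 y2 \<sigma> p q r t"
  shows "(\<Sum>j\<in>UNIV. U$i$j * cnj (U$k$j)) = (if i = k then 1 else 0)"
proof -
  have "inv \<sigma> i = y1 \<longleftrightarrow> i = x1" "inv \<sigma> i = y2 \<longleftrightarrow> i = x2"
    using bij s1 s2 by (metis bij_inv_eq_iff)+
  then have outside: "inv \<sigma> i \<in> UNIV - {y1,y2} \<longleftrightarrow> i \<noteq> x1 \<and> i \<noteq> x2" by auto
  have "(\<Sum>j\<in>UNIV - {y1,y2}. U$i$j * cnj (U$k$j))
      = (\<Sum>j\<in>UNIV - {y1,y2}. (if i = \<sigma> j then 1 else 0) * cnj (if k = \<sigma> j then 1 else 0))"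
    by (rule sum.cong) (auto simp: U_def embed_unitary2_def)
  also have "\<dots> = (if i \<noteq> x1 \<and> i \<noteq> x2 \<and> i = k then 1 else 0)"
    using sum_perm_delta[OF bij] outside by simp
  finally have rest: "(\<Sum>j\<in>UNIV - {y1,y2}. U$i$j * cnj (U$k$j)) = \<dots>" .
  have "cnj (p * cnj r + q * cnj t) = 0" using u by (simp add: unitary2_def)
  then have "r * cnj p + t * cnj q = 0" by (simp add: mult.commute)
  then show ?thesis
    unfolding sum_UNIV_split2[OF y] rest using x y u by (auto simp: U_def embed_unitary2_def unitary2_def)
qed

lemma embed_unitary2_cols_orthonormal:
  defines "U \<equiv> embed_unitary2 x1 x2 y1 y2 \<sigma> p q r t"
  shows "(\<Sum>i\<in>UNIV. cnj (U$i$j) * U$i$l) = (if j = l then 1 else 0)"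
proof (cases "j = y1 \<or> j = y2")
  case False
  have inj: "\<sigma> a = \<sigma> b \<longleftrightarrow> a = b" for a b using bij by (meson bij_is_inj inj_eq)
  have off: "\<sigma> j \<noteq> x1" "\<sigma> j \<noteq> x2" using False inj s1 s2 by metis+
  have "(\<Sum>i\<in>UNIV. cnj (U$i$j) * U$i$l) = (\<Sum>i\<in>UNIV. if i = \<sigma> j then U$i$l else 0)"
    by (rule sum.cong) (use False in \<open>auto simp: U_def embed_unitary2_def\<close>)
  also have "\<dots> = U$(\<sigma> j)$l" by simp
  also have "\<dots> = (if l = y1 then 0 else if l = y2 then 0 else if \<sigma> j = \<sigma> l then 1 else 0)"
    using off by (simp add: U_def embed_unitary2_def)
  also have "\<dots> = (if j = l then 1 else 0)" using False inj by auto
  finally show ?thesis .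
next
  case True
  have rest: "(\<Sum>i\<in>UNIV - {x1,x2}. cnj (U$i$j) * U$i$l) = 0"
    by (rule sum.neutral) (use True in \<open>auto simp: U_def embed_unitary2_def\<close>)
  have outside: "U$x1$l = 0" "U$x2$l = 0" if "l \<noteq> y1" "l \<noteq> y2"
  proof -
    have "x1 \<noteq> \<sigma> l" "x2 \<noteq> \<sigma> l" using that bij s1 s2 by (metis bij_is_inj inj_eq)+
    then show "U$x1$l = 0" "U$x2$l = 0" using that by (simp_all add: U_def embed_unitary2_def)
  qed
  have "cnj (cnj p * q + cnj r * t) = 0" using u by (simp add: unitary2_def)
  then have "cnj q * p + cnj t * r = 0" by (simp add: mult.commute)
  then show ?thesis
    unfolding sum_UNIV_split2[OF x, of "\<lambda>i. cnj (U$i$j) * U$i$l"] rest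
    using True x y u outside by (auto simp: U_def embed_unitary2_def unitary2_def)
qed

lemma unitary_embed_unitary2: "unitary (embed_unitary2 x1 x2 y1 y2 \<sigma> p q r t)"
  by (rule unitaryI[OF embed_unitary2_rows_orthonormal embed_unitary2_cols_orthonormal])

end

lemma embed_unitary2_entry:
  "embed_unitary2 x1 x2 y1 y2 \<sigma> p q r t $ i $ j = block2 x1 x2 y1 y2 p q r t $ i $ j + embed_unitary2 x1 x2 y1 y2 \<sigma> 0 0 0 0 $ i $ j"
  by (simp add: embed_unitary2_def block2_def)

lemma embed_unitary2_uminus_entry:
  "embed_unitary2 x1 x2 y1 y2 \<sigma> (-p) (-q) (-r) (-t) $ i $ j = - block2 x1 x2 y1 y2 p q r t $ i $ j + embed_unitary2 x1 x2 y1 y2 \<sigma> 0 0 0 0 $ i $ j"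
  by (simp add: embed_unitary2_def block2_def)

lemma block2_kernel_via_unitaries: "conjugation_kernel (block2 x1 x2 y1 y2 p q r t) b a e c =
   complex_of_real (1/2) * (conjugation_kernel (embed_unitary2 x1 x2 y1 y2 \<sigma> p q r t) b a e c + conjugation_kernel (embed_unitary2 x1 x2 y1 y2 \<sigma> (-p) (-q) (-r) (-t)) b a e c)
   - conjugation_kernel (embed_unitary2 x1 x2 y1 y2 \<sigma> 0 0 0 0) b a e c"
  unfolding conjugation_kernel_def embed_unitary2_entry[of x1 x2 y1 y2 \<sigma> p q r t] embed_unitary2_uminus_entry
  by (simp add: algebra_simps)

lemma block2_kernel_diff_in_span:
  assumes x: "x1 \<noteq> x2" and y: "y1 \<noteq> y2" and u: "unitary2 p q r t" and u': "unitary2 p' q' r' t'"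
  shows "(\<lambda>b a e c. conjugation_kernel (block2 x1 x2 y1 y2 p q r t) b a e c - conjugation_kernel (block2 x1 x2 y1 y2 p' q' r' t') b a e c) \<in> kernel_span"
proof -
  obtain \<sigma> :: "'a \<Rightarrow> 'a" where s: "bij \<sigma>" "\<sigma> y1 = x1" "\<sigma> y2 = x2" using bij_mapping_two_points[OF x y] .
  let ?U = "\<lambda>p q r t. conjugation_kernel (embed_unitary2 x1 x2 y1 y2 \<sigma> p q r t)"
  have k: "?U p q r t \<in> kernel_span" "?U (-p) (-q) (-r) (-t) \<in> kernel_span" "?U p' q' r' t' \<in> kernel_span" "?U (-p') (-q') (-r') (-t') \<in> kernel_span"
    using u u' by (auto intro!: conjugation_kernel_in_span unitary_embed_unitary2[OF x y s] simp: unitary2_uminus)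
  have "(\<lambda>b a e c. complex_of_real (1/2) * ((?U p q r t b a e c + ?U (-p) (-q) (-r) (-t) b a e c)
     - (?U p' q' r' t' b a e c + ?U (-p') (-q') (-r') (-t') b a e c))) \<in> kernel_span"
    by (rule kernel_span_scale, rule kernel_span_diff; rule kernel_span_add) (use k in auto)
  then show ?thesis
    by (rule kernel_span_cong) (simp add: block2_kernel_via_unitaries[of _ _ _ _ _ _ _ _ _ _ _ _ \<sigma>] algebra_simps)
qed

lemma block2_kernel_diff2_in_span:
  assumes "x1 \<noteq> x2" "y1 \<noteq> y2" "unitary2 p1 q1 r1 t1" "unitary2 p2 q2 r2 t2" "unitary2 p3 q3 r3 t3" "unitary2 p4 q4 r4 t4"
  shows "(\<lambda>b a e c. complex_of_real w * ((conjugation_kernel (block2 x1 x2 y1 y2 p1 q1 r1 t1) b a e c - conjugation_kernel (block2 x1 x2 y1 y2 p2 q2 r2 t2) b a e c)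
      + (conjugation_kernel (block2 x1 x2 y1 y2 p3 q3 r3 t3) b a e c - conjugation_kernel (block2 x1 x2 y1 y2 p4 q4 r4 t4) b a e c))) \<in> kernel_span"
  by (rule kernel_span_scale, rule kernel_span_add; rule block2_kernel_diff_in_span) (use assms in auto)

definition kernel_delta :: "'n \<Rightarrow> 'n \<Rightarrow> 'n \<Rightarrow> 'n \<Rightarrow> 'n \<Rightarrow> 'n \<Rightarrow> 'n \<Rightarrow> 'n \<Rightarrow> complex" where
  "kernel_delta b a e c b' a' e' c' = (if b' = b \<and> a' = a \<and> e' = e \<and> c' = c then 1 else 0)"

lemma block2_entry:
  "x1 \<noteq> x2 \<Longrightarrow> y1 \<noteq> y2 \<Longrightarrow> block2 x1 x2 y1 y2 p q r t $ i $ j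
   = p * of_bool (i = x1 \<and> j = y1) + q * of_bool (i = x1 \<and> j = y2) + r * of_bool (i = x2 \<and> j = y1) + t * of_bool (i = x2 \<and> j = y2)"
  by (auto simp: block2_def of_bool_def)

lemma kernel_delta_of_bool:
  "kernel_delta b a e c b' a' e' c' = of_bool (b' = b \<and> a' = a) * of_bool (e' = e \<and> c' = c)"
  by (simp add: kernel_delta_def of_bool_def)

lemma block2_kernel_diff_offdiag:
  assumes "x1 \<noteq> x2" "y1 \<noteq> y2"
  shows "conjugation_kernel (block2 x1 x2 y1 y2 p 0 0 t) b a e c - conjugation_kernel (block2 x1 x2 y1 y2 p 0 0 (-t)) b a e c
    = 2 * (p * cnj t * kernel_delta x1 y1 x2 y2 b a e c + t * cnj p * kernel_delta x2 y2 x1 y1 b a e c)"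
  unfolding conjugation_kernel_def block2_entry[OF assms] kernel_delta_of_bool by (simp add: algebra_simps)

lemma block2_kernel_diff_same_col:
  assumes "x1 \<noteq> x2" "y1 \<noteq> y2"
  shows "(conjugation_kernel (block2 x1 x2 y1 y2 p q r t) b a e c - conjugation_kernel (block2 x1 x2 y1 y2 p q (-r) (-t)) b a e c)
     + (conjugation_kernel (block2 x1 x2 y1 y2 p (-q) r (-t)) b a e c - conjugation_kernel (block2 x1 x2 y1 y2 p (-q) (-r) t) b a e c)
    = 4 * (p * cnj r * kernel_delta x1 y1 x2 y1 b a e c + q * cnj t * kernel_delta x1 y2 x2 y2 b a e c
         + r * cnj p * kernel_delta x2 y1 x1 y1 b a e c + t * cnj q * kernel_delta x2 y2 x1 y2 b a e c)"
  unfolding conjugation_kernel_def block2_entry[OF assms] kernel_delta_of_bool by (simp add: algebra_simps)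

lemma block2_kernel_diff_same_row:
  assumes "x1 \<noteq> x2" "y1 \<noteq> y2"
  shows "(conjugation_kernel (block2 x1 x2 y1 y2 p q r t) b a e c - conjugation_kernel (block2 x1 x2 y1 y2 p (-q) r (-t)) b a e c)
     + (conjugation_kernel (block2 x1 x2 y1 y2 p q (-r) (-t)) b a e c - conjugation_kernel (block2 x1 x2 y1 y2 p (-q) (-r) t) b a e c)
    = 4 * (p * cnj q * kernel_delta x1 y1 x1 y2 b a e c + r * cnj t * kernel_delta x2 y1 x2 y2 b a e c
         + q * cnj p * kernel_delta x1 y2 x1 y1 b a e c + t * cnj r * kernel_delta x2 y2 x2 y1 b a e c)"
  unfolding conjugation_kernel_def block2_entry[OF assms] kernel_delta_of_bool by (simp add: algebra_simps)

lemma block2_kernel_diff_diag: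
  assumes "x1 \<noteq> x2" "y1 \<noteq> y2"
  shows "(conjugation_kernel (block2 x1 x2 y1 y2 1 0 0 1) b a e c - conjugation_kernel (block2 x1 x2 y1 y2 0 1 1 0) b a e c)
     + (conjugation_kernel (block2 x1 x2 y1 y2 1 0 0 (-1)) b a e c - conjugation_kernel (block2 x1 x2 y1 y2 0 1 (-1) 0) b a e c)
    = 2 * (kernel_delta x1 y1 x1 y1 b a e c + kernel_delta x2 y2 x2 y2 b a e c - kernel_delta x1 y2 x1 y2 b a e c - kernel_delta x2 y1 x2 y1 b a e c)"
  unfolding conjugation_kernel_def block2_entry[OF assms] kernel_delta_of_bool by (simp add: algebra_simps)

lemma offdiag_deltas_in_span:
  assumes x: "x1 \<noteq> x2" and y: "y1 \<noteq> y2" and u: "unitary2 p 0 0 t"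
  shows "(\<lambda>b a e c. complex_of_real w * (2 * (p * cnj t * kernel_delta x1 y1 x2 y2 b a e c + t * cnj p * kernel_delta x2 y2 x1 y1 b a e c))) \<in> kernel_span"
proof -
  have "(\<lambda>b a e c. complex_of_real w * (conjugation_kernel (block2 x1 x2 y1 y2 p 0 0 t) b a e c - conjugation_kernel (block2 x1 x2 y1 y2 p 0 0 (-t)) b a e c)) \<in> kernel_span"
    by (rule kernel_span_scale, rule block2_kernel_diff_in_span[OF x y u]) (use u in \<open>simp add: unitary2_def\<close>)
  then show ?thesis by (rule kernel_span_cong) (simp only: block2_kernel_diff_offdiag[OF x y])
qed

lemma same_col_deltas_in_span:
  assumes x: "x1 \<noteq> x2" and y: "y1 \<noteq> y2" and u: "unitary2 p q r t"
  shows "(\<lambda>b a e c. complex_of_real w * (4 * (p * cnj r * kernel_delta x1 y1 x2 y1 b a e c + q * cnj t * kernel_delta x1 y2 x2 y2 b a e c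
         + r * cnj p * kernel_delta x2 y1 x1 y1 b a e c + t * cnj q * kernel_delta x2 y2 x1 y2 b a e c))) \<in> kernel_span"
proof -
  have "(\<lambda>b a e c. complex_of_real w * ((conjugation_kernel (block2 x1 x2 y1 y2 p q r t) b a e c - conjugation_kernel (block2 x1 x2 y1 y2 p q (-r) (-t)) b a e c)
     + (conjugation_kernel (block2 x1 x2 y1 y2 p (-q) r (-t)) b a e c - conjugation_kernel (block2 x1 x2 y1 y2 p (-q) (-r) t) b a e c))) \<in> kernel_span"
    by (rule block2_kernel_diff2_in_span[OF x y u]) (use unitary2_sign_flips[OF u] in auto)
  then show ?thesis by (rule kernel_span_cong) (simp only: block2_kernel_diff_same_col[OF x y])
qed

lemma same_row_deltas_in_span:
  assumes x: "x1 \<noteq> x2" and y: "y1 \<noteq> y2" and u: "unitary2 p q r t"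
  shows "(\<lambda>b a e c. complex_of_real w * (4 * (p * cnj q * kernel_delta x1 y1 x1 y2 b a e c + r * cnj t * kernel_delta x2 y1 x2 y2 b a e c
         + q * cnj p * kernel_delta x1 y2 x1 y1 b a e c + t * cnj r * kernel_delta x2 y2 x2 y1 b a e c))) \<in> kernel_span"
proof -
  have "(\<lambda>b a e c. complex_of_real w * ((conjugation_kernel (block2 x1 x2 y1 y2 p q r t) b a e c - conjugation_kernel (block2 x1 x2 y1 y2 p (-q) r (-t)) b a e c)
     + (conjugation_kernel (block2 x1 x2 y1 y2 p q (-r) (-t)) b a e c - conjugation_kernel (block2 x1 x2 y1 y2 p (-q) (-r) t) b a e c))) \<in> kernel_span"
    by (rule block2_kernel_diff2_in_span[OF x y u]) (use unitary2_sign_flips[OF u] in auto)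
  then show ?thesis by (rule kernel_span_cong) (simp only: block2_kernel_diff_same_row[OF x y])
qed

lemma diag_deltas_in_span:
  assumes x: "x1 \<noteq> x2" and y: "y1 \<noteq> y2"
  shows "(\<lambda>b a e c. complex_of_real w * (2 * (kernel_delta x1 y1 x1 y1 b a e c + kernel_delta x2 y2 x2 y2 b a e c - kernel_delta x1 y2 x1 y2 b a e c - kernel_delta x2 y1 x2 y1 b a e c))) \<in> kernel_span"
proof -
  have "(\<lambda>b a e c. complex_of_real w * ((conjugation_kernel (block2 x1 x2 y1 y2 1 0 0 1) b a e c - conjugation_kernel (block2 x1 x2 y1 y2 0 1 1 0) b a e c)
     + (conjugation_kernel (block2 x1 x2 y1 y2 1 0 0 (-1)) b a e c - conjugation_kernel (block2 x1 x2 y1 y2 0 1 (-1) 0) b a e c))) \<in> kernel_span"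
    by (rule block2_kernel_diff2_in_span[OF x y]) (auto simp: unitary2_def)
  then show ?thesis by (rule kernel_span_cong) (simp only: block2_kernel_diff_diag[OF x y])
qed

lemma offdiag_delta_sum_in_span:
  assumes "b \<noteq> e" "a \<noteq> c"
  shows "(\<lambda>b' a' e' c'. kernel_delta b a e c b' a' e' c' + kernel_delta e c b a b' a' e' c') \<in> kernel_span"
proof -
  have u: "unitary2 1 0 0 1" by (simp add: unitary2_def algebra_simps)
  show ?thesis using offdiag_deltas_in_span[OF assms u, of "1/2"] by (rule kernel_span_cong) (simp add: algebra_simps)
qed

lemma offdiag_delta_diff_in_span:
  assumes "b \<noteq> e" "a \<noteq> c"
  shows "(\<lambda>b' a' e' c'. \<i> * kernel_delta b a e c b' a' e' c' - \<i> * kernel_delta e c b a b' a' e' c') \<in> kernel_span"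
proof -
  have u: "unitary2 \<i> 0 0 1" by (simp add: unitary2_def algebra_simps)
  show ?thesis using offdiag_deltas_in_span[OF assms u, of "1/2"] by (rule kernel_span_cong) (simp add: algebra_simps)
qed

lemma same_col_delta_sum_in_span:
  assumes "b \<noteq> e" "a \<noteq> s"
  shows "(\<lambda>b' a' e' c'. (kernel_delta b a e a b' a' e' c' - kernel_delta b s e s b' a' e' c') + (kernel_delta e a b a b' a' e' c' - kernel_delta e s b s b' a' e' c')) \<in> kernel_span"
proof -
  \<comment> \<open>4 (3/5) (4/5) = 48/25, whence the weight 25/48\<close>
  have u: "unitary2 (3/5) (4/5) (4/5) (-3/5)" by (simp add: unitary2_def algebra_simps)
  show ?thesis using same_col_deltas_in_span[OF assms u, of "25/48"] by (rule kernel_span_cong) (simp add: algebra_simps)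
qed

lemma same_col_delta_diff_in_span:
  assumes "b \<noteq> e" "a \<noteq> s"
  shows "(\<lambda>b' a' e' c'. \<i> * (kernel_delta b a e a b' a' e' c' - kernel_delta b s e s b' a' e' c') - \<i> * (kernel_delta e a b a b' a' e' c' - kernel_delta e s b s b' a' e' c')) \<in> kernel_span"
proof -
  have u: "unitary2 (3/5) (4/5) (4*\<i>/5) (-3*\<i>/5)" by (simp add: unitary2_def algebra_simps)
  show ?thesis using same_col_deltas_in_span[OF assms u, of "-25/48"] by (rule kernel_span_cong) (simp add: algebra_simps)
qed

lemma same_row_delta_sum_in_span:
  assumes "b \<noteq> r" "a \<noteq> c"
  shows "(\<lambda>b' a' e' c'. (kernel_delta b a b c b' a' e' c' - kernel_delta r a r c b' a' e' c') + (kernel_delta b c b a b' a' e' c' - kernel_delta r c r a b' a' e' c')) \<in> kernel_span"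
proof -
  have u: "unitary2 (3/5) (4/5) (4/5) (-3/5)" by (simp add: unitary2_def algebra_simps)
  show ?thesis using same_row_deltas_in_span[OF assms u, of "25/48"] by (rule kernel_span_cong) (simp add: algebra_simps)
qed

lemma same_row_delta_diff_in_span:
  assumes "b \<noteq> r" "a \<noteq> c"
  shows "(\<lambda>b' a' e' c'. \<i> * (kernel_delta b a b c b' a' e' c' - kernel_delta r a r c b' a' e' c') - \<i> * (kernel_delta b c b a b' a' e' c' - kernel_delta r c r a b' a' e' c')) \<in> kernel_span"
proof -
  have u: "unitary2 (3/5) (4*\<i>/5) (4/5) (-3*\<i>/5)" by (simp add: unitary2_def algebra_simps)
  show ?thesis using same_row_deltas_in_span[OF assms u, of "-25/48"] by (rule kernel_span_cong) (simp add: algebra_simps)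
qed

lemma diag_delta_in_span:
  assumes "b \<noteq> r" "a \<noteq> s"
  shows "(\<lambda>b' a' e' c'. kernel_delta b a b a b' a' e' c' - kernel_delta b s b s b' a' e' c' - kernel_delta r a r a b' a' e' c' + kernel_delta r s r s b' a' e' c') \<in> kernel_span"
  using diag_deltas_in_span[OF assms, of "1/2"] by (rule kernel_span_cong) (simp add: algebra_simps)

lemma kernel_delta_nested:
  "kernel_delta b a e c b' a' e' c' = (if b' = b then if a' = a then if e' = e then if c' = c then 1 else 0 else 0 else 0 else 0)"
  by (simp add: kernel_delta_def)

lemma sum_kernel_delta:
  "(\<Sum>b\<in>UNIV. \<Sum>a\<in>UNIV. \<Sum>e\<in>UNIV. \<Sum>c\<in>UNIV. K b a e c * kernel_delta b a e c b' a' e' c') = K b' a' e' (c'::'n::finite)"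
  by (simp add: kernel_delta_nested mult_if_zero sum_if_const sum.delta')

lemma sum_kernel_delta_col_trace:
  "(\<Sum>b\<in>UNIV. \<Sum>a\<in>UNIV. \<Sum>e\<in>UNIV. \<Sum>c\<in>UNIV. K b a e c * (if a = c then kernel_delta b s e s b' a' e' c' else 0))
   = (if a' = s \<and> c' = s then (\<Sum>a\<in>UNIV. K b' a e' a) else 0)"
  for K :: "'n::finite \<Rightarrow> 'n \<Rightarrow> 'n \<Rightarrow> 'n \<Rightarrow> complex"
  by (simp add: kernel_delta_nested mult_if_zero sum_if_const sum.delta sum.delta')

lemma sum_kernel_delta_row_trace:
  "(\<Sum>b\<in>UNIV. \<Sum>a\<in>UNIV. \<Sum>e\<in>UNIV. \<Sum>c\<in>UNIV. K b a e c * (if b = e then kernel_delta r a r c b' a' e' c' else 0))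
   = (if b' = r \<and> e' = r then (\<Sum>b\<in>UNIV. K b a' b c') else 0)"
  for K :: "'n::finite \<Rightarrow> 'n \<Rightarrow> 'n \<Rightarrow> 'n \<Rightarrow> complex"
  by (simp add: kernel_delta_nested mult_if_zero sum_if_const sum.delta sum.delta')

lemma sum_kernel_delta_full_trace:
  "(\<Sum>b\<in>UNIV. \<Sum>a\<in>UNIV. \<Sum>e\<in>UNIV. \<Sum>c\<in>UNIV. K b a e c * (if a = c \<and> b = e then kernel_delta r s r s b' a' e' c' else 0))
   = (if b' = r \<and> a' = s \<and> e' = r \<and> c' = s then (\<Sum>b\<in>UNIV. \<Sum>a\<in>UNIV. K b a b a) else 0)"
  for K :: "'n::finite \<Rightarrow> 'n \<Rightarrow> 'n \<Rightarrow> 'n \<Rightarrow> complex"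
  by (simp add: kernel_delta_nested mult_if_zero sum_if_const sum.delta sum.delta' if_conj_zero)

text \<open>The elementary kernel at (b,a,e,c), corrected with the reference indices r, s so that
  both partial traces vanish; a kernel with vanishing partial traces is its own expansion
  in these.\<close>

definition reduced_delta :: "'n \<Rightarrow> 'n \<Rightarrow> 'n \<Rightarrow> 'n \<Rightarrow> 'n \<Rightarrow> 'n \<Rightarrow> 'n \<Rightarrow> 'n \<Rightarrow> 'n \<Rightarrow> 'n \<Rightarrow> complex" where
  "reduced_delta r s b a e c b' a' e' c' = kernel_delta b a e c b' a' e' c' - (if a = c then kernel_delta b s e s b' a' e' c' else 0)
     - (if b = e then kernel_delta r a r c b' a' e' c' else 0) + (if a = c \<and> b = e then kernel_delta r s r s b' a' e' c' else 0)"

lemma sum_reduced_delta: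
  fixes K :: "'n::finite \<Rightarrow> 'n \<Rightarrow> 'n \<Rightarrow> 'n \<Rightarrow> complex"
  assumes m1: "\<And>b e. (\<Sum>a\<in>UNIV. K b a e a) = 0" and m2: "\<And>a c. (\<Sum>b\<in>UNIV. K b a b c) = 0"
  shows "(\<Sum>b\<in>UNIV. \<Sum>a\<in>UNIV. \<Sum>e\<in>UNIV. \<Sum>c\<in>UNIV. K b a e c * reduced_delta r s b a e c b' a' e' c') = K b' a' e' c'"
proof -
  have m3: "(\<Sum>b\<in>UNIV. \<Sum>a\<in>UNIV. K b a b a) = 0"
    by (subst sum.swap) (simp add: m2)
  have "\<And>b a e c. K b a e c * reduced_delta r s b a e c b' a' e' c' = K b a e c * kernel_delta b a e c b' a' e' c'
      - K b a e c * (if a = c then kernel_delta b s e s b' a' e' c' else 0)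
      - K b a e c * (if b = e then kernel_delta r a r c b' a' e' c' else 0)
      + K b a e c * (if a = c \<and> b = e then kernel_delta r s r s b' a' e' c' else 0)"
    by (simp only: reduced_delta_def right_diff_distrib distrib_left)
  then show ?thesis by (simp only: sum.distrib sum_subtractf sum_kernel_delta sum_kernel_delta_col_trace sum_kernel_delta_row_trace sum_kernel_delta_full_trace m1 m2 m3) simp
qed

lemma reduced_delta_swap:
  "reduced_delta r s e c b a b' a' e' c' = reduced_delta r s b a e c e' c' b' a'"
  by (simp only: reduced_delta_def kernel_delta_def eq_commute[of c a] eq_commute[of e b]) (simp add: conj_ac)

lemma cnj_reduced_delta:
  "cnj (reduced_delta r s b a e c b' a' e' c') = reduced_delta r s b a e c b' a' e' c'"
  by (simp add: reduced_delta_def kernel_delta_def)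

lemma reduced_delta_degenerate:
  "(a = c \<and> a = s) \<or> (b = e \<and> b = r) \<Longrightarrow> reduced_delta r s b a e c b' a' e' c' = 0"
  by (elim disjE conjE) (simp_all add: reduced_delta_def)

lemma reduced_delta_cases:
  obtains "(a = c \<and> a = s) \<or> (b = e \<and> b = r)"
    | "b \<noteq> e" "a \<noteq> c"
    | "b \<noteq> e" "a = c" "a \<noteq> s"
    | "b = e" "a \<noteq> c" "b \<noteq> r"
    | "b = e" "a = c" "b \<noteq> r" "a \<noteq> s"
  by blast

lemma reduced_delta_sum_in_span:
  "(\<lambda>x1 x2 x3 x4. reduced_delta r s b a e c x1 x2 x3 x4 + reduced_delta r s e c b a x1 x2 x3 x4)
     \<in> kernel_span"
proof (cases rule: reduced_delta_cases[of a c s b e r])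
  case 1
  show ?thesis
    using kernel_span_zero by (rule kernel_span_cong) (use 1 in \<open>auto simp: reduced_delta_degenerate\<close>)
next
  case 2
  show ?thesis
    using offdiag_delta_sum_in_span[OF 2] by (rule kernel_span_cong) (use 2 in \<open>auto simp: reduced_delta_def\<close>)
next
  case 3
  show ?thesis
    using same_col_delta_sum_in_span[OF 3(1,3)] by (rule kernel_span_cong) (use 3 in \<open>auto simp: reduced_delta_def\<close>)
next
  case 4
  show ?thesis
    using same_row_delta_sum_in_span[OF 4(3,2)] by (rule kernel_span_cong) (use 4 in \<open>auto simp: reduced_delta_def\<close>)
next
  case 5
  show ?thesis
    using kernel_span_scale[OF diag_delta_in_span[OF 5(3,4)], of 2] by (rule kernel_span_cong) (use 5 in \<open>auto simp: reduced_delta_def\<close>)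
qed

lemma reduced_delta_diff_in_span:
  "(\<lambda>x1 x2 x3 x4. \<i> * reduced_delta r s b a e c x1 x2 x3 x4 - \<i> * reduced_delta r s e c b a x1 x2 x3 x4)
     \<in> kernel_span"
proof (cases rule: reduced_delta_cases[of a c s b e r])
  case 1
  show ?thesis
    using kernel_span_zero by (rule kernel_span_cong) (use 1 in \<open>auto simp: reduced_delta_degenerate\<close>)
next
  case 2
  show ?thesis
    using offdiag_delta_diff_in_span[OF 2] by (rule kernel_span_cong) (use 2 in \<open>auto simp: reduced_delta_def\<close>)
next
  case 3
  show ?thesis
    using same_col_delta_diff_in_span[OF 3(1,3)] by (rule kernel_span_cong) (use 3 in \<open>auto simp: reduced_delta_def\<close>)
next
  case 4
  show ?thesis
    using same_row_delta_diff_in_span[OF 4(3,2)] by (rule kernel_span_cong) (use 4 in \<open>auto simp: reduced_delta_def\<close>)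
next
  case 5
  show ?thesis
    using kernel_span_zero by (rule kernel_span_cong) (use 5 in simp)
qed

lemma reduced_delta_hermitian_pair_in_span:
  "(\<lambda>x1 x2 x3 x4. z * reduced_delta r s b a e c x1 x2 x3 x4 + cnj z * reduced_delta r s e c b a x1 x2 x3 x4)
     \<in> kernel_span"
proof -
  have "(\<lambda>x1 x2 x3 x4. complex_of_real (Re z) * (reduced_delta r s b a e c x1 x2 x3 x4 + reduced_delta r s e c b a x1 x2 x3 x4)
      + complex_of_real (Im z) * (\<i> * reduced_delta r s b a e c x1 x2 x3 x4 - \<i> * reduced_delta r s e c b a x1 x2 x3 x4))
      \<in> kernel_span"
    using reduced_delta_sum_in_span[of r s b a e c] reduced_delta_diff_in_span[of r s b a e c]
    by (intro kernel_span_add[OF kernel_span_scale kernel_span_scale]) auto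
  then show ?thesis by (rule kernel_span_cong) (simp add: complex_eq_iff algebra_simps)
qed

lemma hermitian_traceless_kernel_expansion:
  fixes K :: "'n::finite \<Rightarrow> 'n \<Rightarrow> 'n \<Rightarrow> 'n \<Rightarrow> complex"
  assumes hermitian: "\<And>b a e c. K e c b a = cnj (K b a e c)"
    and m1: "\<And>b e. (\<Sum>a\<in>UNIV. K b a e a) = 0" and m2: "\<And>a c. (\<Sum>b\<in>UNIV. K b a b c) = 0"
  shows "complex_of_real (1/2) * (\<Sum>b\<in>UNIV. \<Sum>a\<in>UNIV. \<Sum>e\<in>UNIV. \<Sum>c\<in>UNIV.
            K b a e c * reduced_delta r s b a e c x1 x2 x3 x4
            + cnj (K b a e c) * reduced_delta r s e c b a x1 x2 x3 x4) = K x1 x2 x3 x4"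
proof -
  have "(\<Sum>b\<in>UNIV. \<Sum>a\<in>UNIV. \<Sum>e\<in>UNIV. \<Sum>c\<in>UNIV. cnj (K b a e c) * reduced_delta r s e c b a x1 x2 x3 x4)
      = cnj (\<Sum>b\<in>UNIV. \<Sum>a\<in>UNIV. \<Sum>e\<in>UNIV. \<Sum>c\<in>UNIV. K b a e c * reduced_delta r s b a e c x3 x4 x1 x2)"
    by (simp add: reduced_delta_swap cnj_reduced_delta)
  also have "\<dots> = K x1 x2 x3 x4"
    using hermitian[of x3 x4 x1 x2] by (simp only: sum_reduced_delta[of K, OF m1 m2]) simp
  finally show ?thesis
    by (simp only: sum.distrib sum_reduced_delta[of K, OF m1 m2]) simp
qed

lemma hermitian_traceless_kernel_in_span:
  fixes K :: "'n::finite \<Rightarrow> 'n \<Rightarrow> 'n \<Rightarrow> 'n \<Rightarrow> complex"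
  assumes "\<And>b a e c. K e c b a = cnj (K b a e c)"
    and "\<And>b e. (\<Sum>a\<in>UNIV. K b a e a) = 0" and "\<And>a c. (\<Sum>b\<in>UNIV. K b a b c) = 0"
  shows "K \<in> kernel_span"
proof -
  \<comment> \<open>any choice of reference indices works\<close>
  fix r s :: 'n
  have "(\<lambda>x1 x2 x3 x4. complex_of_real (1/2) * (\<Sum>b\<in>UNIV. \<Sum>a\<in>UNIV. \<Sum>e\<in>UNIV. \<Sum>c\<in>UNIV.
            K b a e c * reduced_delta r s b a e c x1 x2 x3 x4
            + cnj (K b a e c) * reduced_delta r s e c b a x1 x2 x3 x4)) \<in> kernel_span"
    by (intro kernel_span_scale kernel_span_sum reduced_delta_hermitian_pair_in_span) simp_all
  then show ?thesis
    by (rule kernel_span_cong) (rule hermitian_traceless_kernel_expansion[of K, OF assms])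
qed

lemma unital_channel_clinear_map_unitary_decomposable:
  fixes T :: "'n::finite cmat \<Rightarrow> 'n cmat"
  assumes "unital_channel T"
  shows "clinear_map T \<and> unitary_decomposable T"
proof -
  have lin: "clinear_map T" and cp: "completely_positive T" and tp: "\<And>A. trace_m (T A) = trace_m A"
    and un: "T (mat 1) = mat 1" using assms unfolding unital_channel_def by auto
  define K0 where "K0 = (\<lambda>b a e c. channel_kernel T b a e c - conjugation_kernel (mat 1 :: 'n cmat) b a e c)"
  have hermitian: "K0 e c b a = cnj (K0 b a e c)" for b a e c
    using channel_kernel_hermitian[OF lin cp, of e c b a] by (auto simp: K0_def conjugation_kernel_mat_1)
  have partial_trace_1: "(\<Sum>a\<in>UNIV. K0 b a e a) = 0" for b e
    using channel_kernel_unital[OF lin un, of b e] by (simp add: K0_def conjugation_kernel_mat_1 sum_subtractf if_conj_zero sum.delta)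
  have partial_trace_2: "(\<Sum>b\<in>UNIV. K0 b a b c) = 0" for a c
    using channel_kernel_trace_preserving[of T a c, OF tp] by (simp add: K0_def conjugation_kernel_mat_1 sum_subtractf if_conj_zero sum.delta)
  have "K0 \<in> kernel_span" by (rule hermitian_traceless_kernel_in_span[of K0, OF hermitian partial_trace_1 partial_trace_2])
  then have "(\<lambda>b a e c. K0 b a e c + conjugation_kernel (mat 1 :: 'n cmat) b a e c) \<in> kernel_span"
    by (rule kernel_span_add[OF _ conjugation_kernel_in_span[OF unitary_mat_1]])
  then have "channel_kernel T \<in> kernel_span" by (simp add: K0_def)
  then obtain L where "unitary_list L" "channel_kernel T = list_kernel L" unfolding kernel_span_def by blast
  then show ?thesis unfolding unitary_decomposable_def using lin choi_eq_list_state_iff[OF lin] by blast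
qed

theorem proposition3:
  fixes T :: "nat \<Rightarrow> ('n::finite cmat \<Rightarrow> 'n cmat)" and p :: "nat \<Rightarrow> real" and k :: nat
  assumes "k \<ge> 1"
    and "\<And>i. i < k \<Longrightarrow> unital_channel (T i)"
    and "\<And>i. i < k \<Longrightarrow> p i \<ge> 0"
    and "(\<Sum>i<k. p i) = 1"
  shows "normU (foldr (\<circ>) (map T [0..<k]) id) \<le> (\<Prod>i<k. normU (T i))
       \<and> normU (\<lambda>X. \<Sum>i<k. p i *\<^sub>R T i X) \<le> (\<Sum>i<k. p i * normU (T i))"
proof -
  have "clinear_map (T i) \<and> unitary_decomposable (T i)" if "i < k" for i
    using assms(2)[OF that] by (rule unital_channel_clinear_map_unitary_decomposable)
  then have channels: "\<forall>S\<in>set (map T [0..<k]). clinear_map S \<and> unitary_decomposable S"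
    by auto
  have "normU (foldr (\<circ>) (map T [0..<k]) id) \<le> prod_list (map normU (map T [0..<k]))"
    using channels by (rule normU_foldr_comp_le)
  also have "\<dots> = (\<Prod>i<k. normU (T i))"
    using prod.distinct_set_conv_list[of "[0..<k]" "normU \<circ> T"] by (simp add: lessThan_atLeast0)
  moreover have "normU (\<lambda>X. \<Sum>i<k. p i *\<^sub>R T i X) \<le> (\<Sum>i<k. p i * normU (T i))"
    using channels assms(3) by (intro normU_sum_scaleR_le) auto
  ultimately show ?thesis by simp
qed

end
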